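(* Let $S$ be a monoid such that (i) $S$ satisfies $x\,y_1y_2\cdots y_n\,x\,y_ny_{n-1}\cdots y_1\approx x\,y_ny_{n-1}\cdots y_1\,x\,y_1y_2\cdots y_n$ for each $n>1$; (ii) $S$ does not satisfy the identity $xyxy\approx xyyx$; (iii) the words $xytyx$ and $xtyxy$ are isoterms for $S$. Then $S$ is non-finitely based.
   Context: All letters denote distinct variables of a countably infinite alphabet; words are elements of the free semigroup on it. A monoid $S$ satisfies an identity $\mathbf u\approx\mathbf v$ if both sides are equal under every evaluation of the variables in $S$. A word $\mathbf w$ is an isoterm for $S$ if $S$ satisfies no identity $\mathbf w\approx\mathbf w'$ with $\mathbf w'\ne\mathbf w$. $S$ is finitely based if all its identities are derivable from a finite subset of them; otherwise non-finitely based. *)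

theory Defs
  imports Main
begin

text \<open>Variables are natural numbers (a countably infinite alphabet); words are
  lists of variables. Semigroup words are the nonempty lists.\<close>

type_synonym word = "nat list"

definition eval_word :: "(nat \<Rightarrow> 'a::monoid_mult) \<Rightarrow> word \<Rightarrow> 'a" where
  "eval_word \<phi> w = prod_list (map \<phi> w)"

definition satisfies :: "'a::monoid_mult itself \<Rightarrow> word \<Rightarrow> word \<Rightarrow> bool" where
  "satisfies S u v \<longleftrightarrow> (\<forall>\<phi> :: nat \<Rightarrow> 'a. eval_word \<phi> u = eval_word \<phi> v)"

definition identities :: "'a::monoid_mult itself \<Rightarrow> (word \<times> word) set" where
  "identities S = {(u, v). u \<noteq> [] \<and> v \<noteq> [] \<and> satisfies S u v}"

definition isoterm :: "'a::monoid_mult itself \<Rightarrow> word \<Rightarrow> bool" where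
  "isoterm S w \<longleftrightarrow> (\<forall>w'. w' \<noteq> [] \<and> satisfies S w w' \<longrightarrow> w' = w)"

text \<open>Substitution of words for variables (monoid substitutions: a variable may be
  replaced by the empty word).\<close>
definition subst :: "(nat \<Rightarrow> word) \<Rightarrow> word \<Rightarrow> word" where
  "subst \<sigma> w = concat (map \<sigma> w)"

text \<open>Equational (monoid) derivability from a set of identities: the fully
  invariant congruence on the free monoid generated by the set.\<close>
inductive derivable :: "(word \<times> word) set \<Rightarrow> word \<Rightarrow> word \<Rightarrow> bool" for \<Sigma> where
  axiom: "(u, v) \<in> \<Sigma> \<Longrightarrow> derivable \<Sigma> u v"
| refl: "derivable \<Sigma> u u"
| sym: "derivable \<Sigma> u v \<Longrightarrow> derivable \<Sigma> v u"
| trans: "derivable \<Sigma> u v \<Longrightarrow> derivable \<Sigma> v w \<Longrightarrow> derivable \<Sigma> u w"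
| subst_ctx: "derivable \<Sigma> u v \<Longrightarrow> derivable \<Sigma> (p @ subst \<sigma> u @ q) (p @ subst \<sigma> v @ q)"

definition finitely_based :: "'a::monoid_mult itself \<Rightarrow> bool" where
  "finitely_based S \<longleftrightarrow>
     (\<exists>\<Sigma>. finite \<Sigma> \<and> \<Sigma> \<subseteq> identities S \<and>
          (\<forall>(u, v) \<in> identities S. derivable \<Sigma> u v))"

end

theory Submission
  imports Defs "HOL-Library.Multiset"
begin

text \<open>Fix \<open>n\<close> and call \<open>0 P 0 (rev P)\<close> a mirror word when \<open>P\<close> is an arrangement of the
  letters \<open>2, \<dots>, n + 1\<close> beginning with \<open>2\<close>. The identity (i) for this \<open>n\<close> turns a mirror word
  into a word that is not a mirror word, whereas a single application of an identity of \<open>S\<close> in at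
  most \<open>n\<close> variables turns mirror words into mirror words. Hence no set of identities with a bounded
  number of variables derives all identities of \<open>S\<close>.

  Mirror words are characterised by their restrictions to two letters, so preservation is checked
  pair by pair. If \<open>p \<sigma>(u) q\<close> is a mirror word, every variable of \<open>u\<close> occurs at most twice, and
  one occurring twice is mapped to a single (doubled) letter. For each pair of letters one finds a
  subword of \<open>u\<close> containing all variables whose images meet the pair which is an isoterm that is
  not even equivalent to the empty word; such words are derived from (ii), (iii) and the instance
  \<open>xyzxzy \<approx> xzyxyz\<close> of (i). Since \<open>u\<close> has fewer variables than the mirror word has letters, a
  doubled \<open>0\<close> leaves some letter undoubled; its position decides the case. The only pairs that may
  be reversed consist of two doubled letters preceded by an undoubled one, and reversing them keeps
  the word a mirror word because neither of them is the leading letter \<open>2\<close>.\<close>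

lemma subst_Nil[simp]: "subst \<tau> [] = []"
  by (simp add: subst_def)

lemma subst_Cons[simp]: "subst \<tau> (z # u) = \<tau> z @ subst \<tau> u"
  by (simp add: subst_def)

lemma subst_append[simp]: "subst \<tau> (a @ b) = subst \<tau> a @ subst \<tau> b"
  by (simp add: subst_def)

lemma subst_subst: "subst \<sigma> (subst \<tau> u) = subst (\<lambda>z. subst \<sigma> (\<tau> z)) u"
  by (induction u) auto

lemma subst_singleton: "subst (\<lambda>z. [f z]) u = map f u"
  by (induction u) auto

lemma filter_subst: "filter P (subst \<tau> u) = subst (\<lambda>z. filter P (\<tau> z)) u"
  by (induction u) auto

lemma subst_cong: "(\<And>z. z \<in> set u \<Longrightarrow> \<tau> z = \<tau>' z) \<Longrightarrow> subst \<tau> u = subst \<tau>' u"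
  by (induction u) auto

lemma subst_filter_support:
  "(\<And>z. z \<in> set u \<Longrightarrow> \<tau> z \<noteq> [] \<Longrightarrow> z \<in> X) \<Longrightarrow> subst \<tau> (filter (\<lambda>z. z \<in> X) u) = subst \<tau> u"
  by (induction u) auto

lemma eval_word_append[simp]: "eval_word \<phi> (a @ b) = eval_word \<phi> a * eval_word \<phi> b"
  by (simp add: eval_word_def)

lemma eval_word_Nil[simp]: "eval_word \<phi> [] = 1"
  by (simp add: eval_word_def)

lemma eval_word_Cons[simp]: "eval_word \<phi> (z # b) = \<phi> z * eval_word \<phi> b"
  by (simp add: eval_word_def)

lemma eval_word_subst: "eval_word \<phi> (subst \<tau> u) = eval_word (\<lambda>z. eval_word \<phi> (\<tau> z)) u"
  by (induction u) (auto simp: mult.assoc)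

lemma satisfies_sym: "satisfies S u v \<Longrightarrow> satisfies S v u"
  by (simp add: satisfies_def)

lemma satisfies_trans: "satisfies S u v \<Longrightarrow> satisfies S v w \<Longrightarrow> satisfies S u w"
  by (simp add: satisfies_def)

lemma satisfies_subst: "satisfies S u v \<Longrightarrow> satisfies S (subst \<tau> u) (subst \<tau> v)"
  unfolding satisfies_def by (simp add: eval_word_subst)

lemma satisfies_context: "satisfies S u v \<Longrightarrow> satisfies S (p @ u @ q) (p @ v @ q)"
  unfolding satisfies_def by (simp add: mult.assoc)

lemma satisfies_map: "satisfies S u v \<Longrightarrow> satisfies S (map f u) (map f v)"
  using satisfies_subst[of S u v "\<lambda>z. [f z]"] by (simp add: subst_singleton)

lemma satisfies_filter:
  "satisfies S u v \<Longrightarrow> satisfies S (filter (\<lambda>z. z \<in> X) u) (filter (\<lambda>z. z \<in> X) v)"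
proof -
  have "subst (\<lambda>z. if z \<in> X then [z] else []) w = filter (\<lambda>z. z \<in> X) w" for w
    by (induction w) auto
  then show "satisfies S u v \<Longrightarrow> ?thesis" by (metis satisfies_subst)
qed

section \<open>A syntactic criterion for the absence of a finite basis\<close>

lemma derivable_preserves_membership:
  assumes "derivable \<Sigma> u v"
    and closed: "\<And>a b p \<sigma> q. (a, b) \<in> \<Sigma> \<Longrightarrow> p @ subst \<sigma> a @ q \<in> C \<longleftrightarrow> p @ subst \<sigma> b @ q \<in> C"
  shows "p @ subst \<sigma> u @ q \<in> C \<longleftrightarrow> p @ subst \<sigma> v @ q \<in> C"
  using assms(1)
proof (induction arbitrary: p \<sigma> q)
  case (subst_ctx u v p' \<sigma>' q')
  have "p @ subst \<sigma> (p' @ subst \<sigma>' t @ q') @ q =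
      (p @ subst \<sigma> p') @ subst (\<lambda>z. subst \<sigma> (\<sigma>' z)) t @ (subst \<sigma> q' @ q)" for t
    by (simp add: subst_subst)
  then show ?case using subst_ctx.IH by metis
qed (use closed in blast)+

lemma not_finitely_based_if_separated:
  fixes S :: "'a::monoid_mult itself"
  assumes separated: "\<And>n. \<exists>C u v. (u, v) \<in> identities S \<and> u \<in> C \<and> v \<notin> C \<and>
      (\<forall>a b p \<sigma> q. satisfies S a b \<longrightarrow> card (set a) \<le> n \<longrightarrow>
          p @ subst \<sigma> a @ q \<in> C \<longrightarrow> p @ subst \<sigma> b @ q \<in> C)"
  shows "\<not> finitely_based S"
proof
  assume "finitely_based S"
  then obtain \<Sigma> where fin: "finite \<Sigma>" and sub: "\<Sigma> \<subseteq> identities S"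
    and complete: "\<forall>(u, v) \<in> identities S. derivable \<Sigma> u v"
    unfolding finitely_based_def by blast
  define n where "n = Max (insert 0 ((\<lambda>(a, b). max (card (set a)) (card (set b))) ` \<Sigma>))"
  have bound: "card (set a) \<le> n \<and> card (set b) \<le> n" if "(a, b) \<in> \<Sigma>" for a b
  proof -
    have "max (card (set a)) (card (set b)) \<le> n"
      unfolding n_def by (rule Max_ge) (use fin that in force)+
    then show ?thesis by simp
  qed
  obtain C u v where uv: "(u, v) \<in> identities S" "u \<in> C" "v \<notin> C"
    and closed: "\<And>a b p \<sigma> q. satisfies S a b \<Longrightarrow> card (set a) \<le> n \<Longrightarrow>
          p @ subst \<sigma> a @ q \<in> C \<Longrightarrow> p @ subst \<sigma> b @ q \<in> C"
    using separated[of n] by blast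
  have axioms_closed: "p @ subst \<sigma> a @ q \<in> C \<longleftrightarrow> p @ subst \<sigma> b @ q \<in> C"
    if ab: "(a, b) \<in> \<Sigma>" for a b p \<sigma> q
  proof -
    have "satisfies S a b" using ab sub unfolding identities_def by blast
    then show ?thesis using closed[of a b] closed[of b a] satisfies_sym bound[OF ab] by blast
  qed
  have "derivable \<Sigma> u v" using complete uv(1) by blast
  from derivable_preserves_membership[OF this axioms_closed, of "[]" "\<lambda>z. [z]" "[]"]
  show False using uv(2,3) by (simp add: subst_singleton)
qed

section \<open>Restrictions of words to sets of letters\<close>

lemma eq_if_pair_filters_eq:
  assumes "set y \<union> set y' \<subseteq> A"
    and "\<And>a b. a \<in> A \<Longrightarrow> b \<in> A \<Longrightarrow> filter (\<lambda>z. z = a \<or> z = b) y = filter (\<lambda>z. z = a \<or> z = b) y'"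
  shows "y = y'"
  using assms
proof (induction y arbitrary: y')
  case Nil
  show ?case
  proof (cases y')
    case (Cons c y2)
    then have "c \<in> A" using Nil by auto
    from Nil(2)[OF this this] Cons show ?thesis by simp
  qed simp
next
  case (Cons c y1)
  then have cA: "c \<in> A" by auto
  from Cons(3)[OF cA cA] obtain c' y1' where y': "y' = c' # y1'"
    by (cases y') auto
  have c'A: "c' \<in> A" using Cons(2) y' by auto
  have "c = c'"
  proof (rule ccontr)
    assume ne: "c \<noteq> c'"
    from Cons(3)[OF cA c'A] y' ne show False by simp
  qed
  have "y1 = y1'"
  proof (rule Cons.IH)
    show "set y1 \<union> set y1' \<subseteq> A" using Cons(2) y' by auto
    fix a b assume "a \<in> A" "b \<in> A"
    from Cons(3)[OF this] y' \<open>c = c'\<close> show "filter (\<lambda>z. z = a \<or> z = b) y1 = filter (\<lambda>z. z = a \<or> z = b) y1'"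
      by (auto split: if_splits)
  qed
  then show ?case using y' \<open>c = c'\<close> by simp
qed

lemma filter_filter_absorb: "(\<And>z. P z \<Longrightarrow> Q z) \<Longrightarrow> filter P (filter Q y) = filter P y"
  by (induction y) auto

text \<open>All rearrangements of a word; rigidity of short concrete words is settled below by
  evaluating a filter over this list.\<close>

fun arrangements :: "nat \<Rightarrow> 'a list \<Rightarrow> 'a list list" where
  "arrangements 0 xs = [[]]"
| "arrangements (Suc n) xs = concat (map (\<lambda>x. map ((#) x) (arrangements n (remove1 x xs))) (remdups xs))"

lemma arrangements_complete: "mset y = mset xs \<Longrightarrow> y \<in> set (arrangements (length xs) xs)"
proof (induction y arbitrary: xs)
  case Nil then show ?case by (cases xs) auto
next
  case (Cons a y)
  then have a: "a \<in> set xs" by (metis list.set_intros(1) set_mset_mset)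
  have len: "length xs = Suc (length y)" using Cons(2) by (metis mset_eq_length length_Cons)
  have "mset y = mset (remove1 a xs)" using Cons(2) by (simp add: mset_remove1) (metis add_mset_remove_trivial)
  then have "y \<in> set (arrangements (length (remove1 a xs)) (remove1 a xs))" by (rule Cons.IH)
  moreover have "length (remove1 a xs) = length y" using a len by (simp add: length_remove1)
  ultimately show ?case using a len by auto
qed

lemma mset_eq_from_pair_filters:
  assumes "set y \<subseteq> set r"
    and "\<And>a. a \<in> set r \<Longrightarrow> \<exists>b. filter (\<lambda>z. z \<in> {a,b}) y = filter (\<lambda>z. z \<in> {a,b}) r"
  shows "mset y = mset r"
proof (rule multiset_eqI)
  fix a
  show "count (mset y) a = count (mset r) a"
  proof (cases "a \<in> set r")
    case True
    then obtain b where b: "filter (\<lambda>z. z \<in> {a,b}) y = filter (\<lambda>z. z \<in> {a,b}) r" using assms(2) by blast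
    have "count (mset y) a = count (mset (filter (\<lambda>z. z \<in> {a,b}) y)) a" by simp
    also have "\<dots> = count (mset (filter (\<lambda>z. z \<in> {a,b}) r)) a" using b by simp
    also have "\<dots> = count (mset r) a" by simp
    finally show ?thesis .
  next
    case False
    then have "a \<notin> set y" using assms(1) by auto
    then show ?thesis using False by (metis count_mset_0_iff)
  qed
qed

lemma subst_inj_on_prefix_code:
  assumes "\<And>a. a \<in> A \<Longrightarrow> \<tau> a \<noteq> []"
    and "\<And>a b. a \<in> A \<Longrightarrow> b \<in> A \<Longrightarrow> hd (\<tau> a) = hd (\<tau> b) \<Longrightarrow> a = b"
    and "set x \<subseteq> A" "set y \<subseteq> A" "subst \<tau> x = subst \<tau> y"
  shows "x = y"
  using assms(3-5)
proof (induction x arbitrary: y)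
  case Nil
  then show ?case using assms(1) by (cases y) auto
next
  case (Cons a x)
  then show ?case
  proof (cases y)
    case Nil then show ?thesis using Cons assms(1) by auto
  next
    case (Cons b y')
    have aA: "a \<in> A" and bA: "b \<in> A" using Cons.prems Cons by auto
    have "hd (\<tau> a) = hd (\<tau> b)"
      using Cons.prems(3) Cons assms(1)[OF aA] assms(1)[OF bA]
      by (cases "\<tau> a"; cases "\<tau> b") auto
    then have "a = b" using assms(2) aA bA by blast
    then show ?thesis using Cons.prems Cons Cons.IH by auto
  qed
qed

lemma filter_eq_mono: "filter (\<lambda>z. z \<in> X) y = filter (\<lambda>z. z \<in> X) r \<Longrightarrow> B \<subseteq> X \<Longrightarrow>
   filter (\<lambda>z. z \<in> B) y = filter (\<lambda>z. z \<in> B) r"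
proof -
  assume f: "filter (\<lambda>z. z \<in> X) y = filter (\<lambda>z. z \<in> X) r" and b: "B \<subseteq> X"
  have "filter (\<lambda>z. z \<in> B) (filter (\<lambda>z. z \<in> X) t) = filter (\<lambda>z. z \<in> B) t" for t
    by (rule filter_filter_absorb) (use b in auto)
  then show ?thesis using f by metis
qed

lemma mset_eq_from_cover:
  assumes "set y \<subseteq> set r" "set r \<subseteq> \<Union>(set Xs)"
    "\<forall>X\<in>set Xs. filter (\<lambda>z. z \<in> X) y = filter (\<lambda>z. z \<in> X) r"
  shows "mset y = mset r"
proof (rule mset_eq_from_pair_filters[OF assms(1)])
  fix a assume "a \<in> set r"
  then obtain X where X: "X \<in> set Xs" "a \<in> X" using assms(2) by blast
  have "filter (\<lambda>z. z \<in> X) y = filter (\<lambda>z. z \<in> X) r" using assms(3) X(1) by blast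
  then have "filter (\<lambda>z. z \<in> {a,a}) y = filter (\<lambda>z. z \<in> {a,a}) r"
    by (rule filter_eq_mono) (use X(2) in simp)
  then show "\<exists>b. filter (\<lambda>z. z \<in> {a, b}) y = filter (\<lambda>z. z \<in> {a, b}) r" by blast
qed

lemma arrangements_from_cover:
  assumes "set y \<subseteq> set r" "set r \<subseteq> \<Union>(set Xs)"
    "\<forall>X\<in>set Xs. filter (\<lambda>z. z \<in> X) y = filter (\<lambda>z. z \<in> X) r"
  shows "y \<in> set (arrangements (length r) r)"
  using arrangements_complete[OF mset_eq_from_cover[OF assms]] .

lemma unique_filter_result: "y \<in> set xs \<Longrightarrow> P y \<Longrightarrow> filter P xs = [r] \<Longrightarrow> y = r"
proof -
  assume a: "y \<in> set xs" "P y" and f: "filter P xs = [r]"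
  from a have "y \<in> set (filter P xs)" by simp
  then show "y = r" unfolding f by simp
qed

lemma mem_of_filter_eq: "y \<in> set xs \<Longrightarrow> P y \<Longrightarrow> filter P xs = rs \<Longrightarrow> y \<in> set rs"
  by auto

lemma eq_from_pair_cover:
  assumes "set y \<subseteq> set r"
    and "\<forall>a\<in>set r. \<forall>b\<in>set r. \<exists>X\<in>set Xs. a \<in> X \<and> b \<in> X"
    and "\<forall>X\<in>set Xs. filter (\<lambda>z. z \<in> X) y = filter (\<lambda>z. z \<in> X) r"
  shows "y = r"
proof (rule eq_if_pair_filters_eq[where A = "set r"])
  show "set y \<union> set r \<subseteq> set r" using assms(1) by auto
  fix a b assume "a \<in> set r" "b \<in> set r"
  then obtain X where X: "X \<in> set Xs" "a \<in> X" "b \<in> X" using assms(2) by blast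
  have "filter (\<lambda>z. z \<in> X) y = filter (\<lambda>z. z \<in> X) r" using assms(3) X(1) by blast
  then have "filter (\<lambda>z. z \<in> {a,b}) y = filter (\<lambda>z. z \<in> {a,b}) r"
    by (rule filter_eq_mono) (use X(2,3) in simp)
  then show "filter (\<lambda>z. z = a \<or> z = b) y = filter (\<lambda>z. z = a \<or> z = b) r" by simp
qed

lemma filter_distinct_none: "X \<inter> set xs = {} \<Longrightarrow> filter (\<lambda>z. z \<in> X) xs = []"
  by (induction xs) auto

lemma distinct_set_one: "distinct ys \<Longrightarrow> set ys = {a} \<Longrightarrow> ys = [a]"
proof (cases ys)
  case (Cons b ys')
  assume d: "distinct ys" and s: "set ys = {a}"
  then have "b = a" "set ys' \<subseteq> {a}" "a \<notin> set ys'" using Cons by auto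
  then have "ys' = []" by (cases ys') auto
  then show ?thesis using Cons \<open>b = a\<close> by simp
qed simp

lemma distinct_set_two: "distinct ys \<Longrightarrow> set ys = {a,b} \<Longrightarrow> a \<noteq> b \<Longrightarrow> ys = [a,b] \<or> ys = [b,a]"
proof -
  assume d: "distinct ys" and s: "set ys = {a,b}" and ab: "a \<noteq> b"
  have "length ys = 2" using distinct_card[OF d] s ab by simp
  then obtain c e where ys: "ys = [c,e]"
    by (auto simp: numeral_2_eq_2 length_Suc_conv)
  then show ?thesis using s d ab by (simp add: doubleton_eq_iff)
qed

lemma filter_distinct_one: "distinct xs \<Longrightarrow> X \<inter> set xs = {a} \<Longrightarrow> filter (\<lambda>z. z \<in> X) xs = [a]"
  by (rule distinct_set_one) auto

lemma filter_distinct_two: "distinct xs \<Longrightarrow> a \<in> set xs \<Longrightarrow> b \<in> set xs \<Longrightarrow> a \<noteq> b \<Longrightarrow>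
  filter (\<lambda>z. z \<in> {a,b}) xs = [a,b] \<or> filter (\<lambda>z. z \<in> {a,b}) xs = [b,a]"
  by (rule distinct_set_two) auto

section \<open>Rigid words\<close>

text \<open>Rigidity strengthens being an isoterm by excluding the empty word as the other side: deleting
  letters from both sides of an identity may empty one of them.\<close>

definition rigid :: "'a::monoid_mult itself \<Rightarrow> word \<Rightarrow> bool" where
  "rigid S r \<longleftrightarrow> (\<forall>r'. satisfies S r r' \<longrightarrow> r' = r)"

locale nfb_setting =
  fixes S :: "'a::monoid_mult itself"
  assumes abab_not_abba: "\<not> satisfies S [0, 1, 0, 1] [0, 1, 1, 0]"
    and isoterm_abcba: "isoterm S [0, 1, 2, 1, 0]"
    and isoterm_acbab: "isoterm S [0, 2, 1, 0, 1]"
    and abcacb_identity: "satisfies S [0, 2, 3, 0, 3, 2] [0, 3, 2, 0, 2, 3]"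
begin

lemma satisfies_Nil_left: "satisfies S [] y \<Longrightarrow> y = []"
proof (rule ccontr)
  assume s: "satisfies S [] y" and ne: "y \<noteq> []"
  have "satisfies S (subst (\<lambda>_. [2]) []) (subst (\<lambda>_. [2]) y)" by (rule satisfies_subst[OF s])
  then have "satisfies S ([0,1,2] @ [] @ [1,0]) ([0,1,2] @ subst (\<lambda>_. [2]) y @ [1,0])"
    by (intro satisfies_context) simp
  then have "[0,1,2] @ subst (\<lambda>_. [2]) y @ [1,0] = [0,1,2,1,0]"
    using isoterm_abcba unfolding isoterm_def by auto
  moreover have "length (subst (\<lambda>_. [2::nat]) y) = length y"
    by (induction y) auto
  ultimately show False using ne by (cases y) auto
qed

lemma satisfies_Nil_right: "satisfies S y [] \<Longrightarrow> y = []"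
  using satisfies_Nil_left satisfies_sym by blast

lemma satisfies_set_subset: "satisfies S u v \<Longrightarrow> set v \<subseteq> set u"
proof
  fix z assume s: "satisfies S u v" and zv: "z \<in> set v"
  show "z \<in> set u"
  proof (rule ccontr)
    assume zu: "z \<notin> set u"
    let ?\<tau> = "\<lambda>x. if x = z then [z] else []"
    have "satisfies S (subst ?\<tau> u) (subst ?\<tau> v)" by (rule satisfies_subst[OF s])
    moreover have "subst ?\<tau> u = []" using zu by (induction u) auto
    moreover have "subst ?\<tau> v \<noteq> []" using zv by (induction v) auto
    ultimately show False using satisfies_Nil_left by auto
  qed
qed

lemma rigidD: "rigid S r \<Longrightarrow> satisfies S r y \<Longrightarrow> y = r"
  unfolding rigid_def by blast

lemma rigid_Nil: "rigid S []"
  unfolding rigid_def using satisfies_Nil_left by blast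

lemma rigid_if_isoterm: "isoterm S r \<Longrightarrow> r \<noteq> [] \<Longrightarrow> rigid S r"
  unfolding rigid_def
proof (intro allI impI)
  fix r' assume i: "isoterm S r" and ne: "r \<noteq> []" and s: "satisfies S r r'"
  show "r' = r"
  proof (cases "r' = []")
    case True then show ?thesis using s satisfies_Nil_right ne by simp
  next
    case False then show ?thesis using i s unfolding isoterm_def by blast
  qed
qed

lemma satisfies_map_nth_inverse:
  assumes s: "satisfies S (map (nth ys) r) y" and d: "distinct ys" and sr: "set r \<subseteq> {..<length ys}"
  shows "\<exists>y'. y = map (nth ys) y' \<and> satisfies S r y'"
proof -
  let ?g = "inv_into {..<length ys} (nth ys)"
  have inj: "inj_on (nth ys) {..<length ys}" using d by (simp add: inj_on_nth)
  have "set y \<subseteq> set (map (nth ys) r)" using satisfies_set_subset[OF s] .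
  also have "\<dots> \<subseteq> set ys" using sr by (auto intro!: nth_mem)
  finally have sy: "set y \<subseteq> set ys" .
  have e1: "map ?g (map (nth ys) r) = r"
    using sr by (induction r) (auto simp: inv_into_f_f[OF inj])
  from satisfies_map[OF s, of ?g] have s2: "satisfies S r (map ?g y)" unfolding e1 .
  have "\<forall>x\<in>set y. ys ! (?g x) = x"
  proof
    fix x assume "x \<in> set y"
    then have "x \<in> set ys" using sy by auto
    then have "x \<in> nth ys ` {..<length ys}" by (auto simp: in_set_conv_nth)
    then show "ys ! (?g x) = x" by (rule f_inv_into_f)
  qed
  then have "map (nth ys) (map ?g y) = y" by (induction y) auto
  then show ?thesis using s2 by metis
qed

lemma rigid_map_nth:
  assumes r: "rigid S r" and d: "distinct ys" and sr: "set r \<subseteq> {..<length ys}"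
  shows "rigid S (map (nth ys) r)"
  unfolding rigid_def
proof (intro allI impI)
  fix y assume "satisfies S (map (nth ys) r) y"
  from satisfies_map_nth_inverse[OF this d sr] obtain y' where "y = map (nth ys) y'" "satisfies S r y'"
    by blast
  then show "y = map (nth ys) r" using rigidD[OF r] by metis
qed

lemma rigid_if_pair_restrictions_rigid:
  assumes two: "\<exists>a\<in>set x. \<exists>b\<in>set x. a \<noteq> b"
    and pr: "\<And>a b. a \<in> set x \<Longrightarrow> b \<in> set x \<Longrightarrow> a \<noteq> b \<Longrightarrow>
              \<exists>X. a \<in> X \<and> b \<in> X \<and> rigid S (filter (\<lambda>z. z \<in> X) x)"
  shows "rigid S x"
  unfolding rigid_def
proof (intro allI impI)
  fix y assume s: "satisfies S x y"
  have sy: "set y \<subseteq> set x" using satisfies_set_subset[OF s] .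
  have pairs: "filter (\<lambda>z. z = a \<or> z = b) y = filter (\<lambda>z. z = a \<or> z = b) x"
    if ab: "a \<in> set x" "b \<in> set x" "a \<noteq> b" for a b
  proof -
    obtain X where X: "a \<in> X" "b \<in> X" "rigid S (filter (\<lambda>z. z \<in> X) x)" using pr[OF ab] by blast
    have "filter (\<lambda>z. z \<in> X) y = filter (\<lambda>z. z \<in> X) x"
      using rigidD[OF X(3) satisfies_filter[OF s]] .
    then have "filter (\<lambda>z. z = a \<or> z = b) (filter (\<lambda>z. z \<in> X) y) =
               filter (\<lambda>z. z = a \<or> z = b) (filter (\<lambda>z. z \<in> X) x)" by simp
    moreover have e: "filter (\<lambda>z. z = a \<or> z = b) (filter (\<lambda>z. z \<in> X) t) = filter (\<lambda>z. z = a \<or> z = b) t" for t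
      using X(1,2) by (intro filter_filter_absorb) auto
    ultimately show ?thesis by metis
  qed
  show "y = x"
  proof (rule eq_if_pair_filters_eq[where A = "set x"])
    show "set y \<union> set x \<subseteq> set x" using sy by auto
    fix a b assume a: "a \<in> set x" and b: "b \<in> set x"
    show "filter (\<lambda>z. z = a \<or> z = b) y = filter (\<lambda>z. z = a \<or> z = b) x"
    proof (cases "a = b")
      case False then show ?thesis using pairs a b by blast
    next
      case True
      obtain a' b' where ab': "a' \<in> set x" "b' \<in> set x" "a' \<noteq> b'" using two by blast
      define c where "c = (if a' = a then b' else a')"
      have c: "c \<in> set x" "c \<noteq> a" using ab' unfolding c_def by auto
      have "filter (\<lambda>z. z = a \<or> z = c) y = filter (\<lambda>z. z = a \<or> z = c) x"
        using pairs[OF a c(1)] c(2) by auto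
      then have "filter (\<lambda>z. z = a) (filter (\<lambda>z. z = a \<or> z = c) y) =
                 filter (\<lambda>z. z = a) (filter (\<lambda>z. z = a \<or> z = c) x)" by simp
      moreover have e: "filter (\<lambda>z. z = a) (filter (\<lambda>z. z = a \<or> z = c) t) = filter (\<lambda>z. z = a) t" for t
        by (intro filter_filter_absorb) auto
      ultimately show ?thesis using True by (metis (no_types, lifting) filter_cong)
    qed
  qed
qed

lemma rigid_a: "rigid S [0]"
  unfolding rigid_def
proof (intro allI impI)
  fix y assume s: "satisfies S [0] y"
  have sy: "set y \<subseteq> {0}" using satisfies_set_subset[OF s] by simp
  have ne: "y \<noteq> []" using s satisfies_Nil_right by force
  have yr: "y = replicate (length y) 0" using sy by (induction y) auto
  show "y = [0]"
  proof (rule ccontr)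
    assume "y \<noteq> [0]"
    then have l2: "length y \<ge> 2" using ne yr by (cases y; cases "tl y") auto
    let ?\<tau> = "\<lambda>_::nat. [2::nat]"
    have "satisfies S ([0,1] @ subst ?\<tau> [0] @ [1,0]) ([0,1] @ subst ?\<tau> y @ [1,0])"
      by (intro satisfies_context satisfies_subst s)
    then have "[0,1] @ subst ?\<tau> y @ [1,0] = [0,1,2,1,0]" using isoterm_abcba unfolding isoterm_def by auto
    moreover have "length (subst ?\<tau> y) = length y" by (induction y) auto
    ultimately have "length y + 4 = 5" by simp
    then show False using l2 by simp
  qed
qed

lemma rigid_ab: "rigid S [0,1]"
  unfolding rigid_def
proof (intro allI impI)
  fix y assume s: "satisfies S [0,1] y"
  have sy: "set y \<subseteq> set [0,1::nat]" using satisfies_set_subset[OF s] by simp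
  have f0: "filter (\<lambda>z. z \<in> {0}) y = [0]"
    using rigidD[OF rigid_a] satisfies_filter[OF s, of "{0}"] by simp
  have r1: "rigid S [1]" using rigid_map_nth[OF rigid_a, of "[1]"] by simp
  have f1: "filter (\<lambda>z. z \<in> {1}) y = [1]"
    using rigidD[OF r1] satisfies_filter[OF s, of "{1}"] by simp
  have "mset y = mset [0,1::nat]"
  proof (rule mset_eq_from_pair_filters[OF sy])
    fix a assume "a \<in> set [0,1::nat]"
    then have "a = 0 \<or> a = 1" by simp
    then show "\<exists>b. filter (\<lambda>z. z \<in> {a, b}) y = filter (\<lambda>z. z \<in> {a, b}) [0, 1]"
    proof
      assume "a = 0" then show ?thesis using f0 by (intro exI[of _ 0]) simp
    next
      assume "a = 1" then show ?thesis using f1 by (intro exI[of _ 1]) simp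
    qed
  qed
  from arrangements_complete[OF this] have "y \<in> set (arrangements (length [0,1::nat]) [0,1])" .
  then have "y = [0,1] \<or> y = [1,0]" by simp
  moreover have "y \<noteq> [1,0]"
  proof
    assume "y = [1,0]"
    then have "satisfies S ([0,1] @ [0,1] @ []) ([0,1] @ [1,0] @ [])" using satisfies_context s by blast
    then show False using abab_not_abba by simp
  qed
  ultimately show "y = [0,1]" by blast
qed

lemma rigid_aba: "rigid S [0,1,0]"
  unfolding rigid_def
proof (intro allI impI)
  fix y assume s: "satisfies S [0,1,0] y"
  have sy: "set y \<subseteq> {0,1}" using satisfies_set_subset[OF s] by auto
  let ?\<tau> = "\<lambda>z::nat. if z = 0 then [0::nat] else [1,2,1]"
  have "satisfies S (subst ?\<tau> [0,1,0]) (subst ?\<tau> y)" by (rule satisfies_subst[OF s])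
  then have "subst ?\<tau> y = [0,1,2,1,0]"
    using rigidD[OF rigid_if_isoterm[OF isoterm_abcba]] by simp
  then have "subst ?\<tau> y = subst ?\<tau> [0,1,0]" by simp
  then show "y = [0,1,0]"
  proof (rule subst_inj_on_prefix_code[where A = "{0,1}" and \<tau> = ?\<tau>, rotated 4])
    show "set y \<subseteq> {0,1}" by (rule sy)
    show "set [0,1,0::nat] \<subseteq> {0,1}" by simp
    fix a b :: nat assume "a \<in> {0,1}" "b \<in> {0,1}" "hd (?\<tau> a) = hd (?\<tau> b)"
    then show "a = b" by (auto split: if_splits)
  qed simp
qed

lemma rigid_filter_eq: "satisfies S x y \<Longrightarrow> rigid S (filter (\<lambda>z. z \<in> X) x) \<Longrightarrow>
   filter (\<lambda>z. z \<in> X) y = filter (\<lambda>z. z \<in> X) x"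
  by (rule rigidD[OF _ satisfies_filter])

lemma filter_eq_rigid: "satisfies S x y \<Longrightarrow> rigid S r \<Longrightarrow> filter (\<lambda>z. z \<in> X) y = r \<Longrightarrow>
   filter (\<lambda>z. z \<in> X) x = r"
proof -
  assume s: "satisfies S x y" and r: "rigid S r" and f: "filter (\<lambda>z. z \<in> X) y = r"
  have "satisfies S r (filter (\<lambda>z. z \<in> X) x)" using satisfies_sym[OF satisfies_filter[OF s, of X]] f by simp
  then show ?thesis by (rule rigidD[OF r])
qed

lemma rigid_abcba: "rigid S [0,1,2,1,0]" by (rule rigid_if_isoterm[OF isoterm_abcba]) simp

lemma rigid_abcac: "rigid S [0,1,2,0,2]"
  using rigid_map_nth[OF rigid_if_isoterm[OF isoterm_acbab], of "[0,2,1]"] by simp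

lemma rigid_abad: "rigid S [0,1,0,2]"
  unfolding rigid_def
proof (intro allI impI)
  fix y assume s: "satisfies S [0,1,0,2] y"
  have sy: "set y \<subseteq> set [0,1,0,2::nat]" using satisfies_set_subset[OF s] by simp
  have f01: "filter (\<lambda>z. z \<in> {0,1}) y = filter (\<lambda>z. z \<in> {0,1}) [0,1,0,2]"
    by (rule rigid_filter_eq[OF s]) (use rigid_aba in simp)
  have f12: "filter (\<lambda>z. z \<in> {1,2}) y = filter (\<lambda>z. z \<in> {1,2}) [0,1,0,2]"
    by (rule rigid_filter_eq[OF s]) (use rigid_map_nth[OF rigid_ab, of "[1,2]"] in simp)
  have r: "rigid S [0,2,0]" using rigid_map_nth[OF rigid_aba, of "[0,2]"] by simp
  have ex: "filter (\<lambda>z. z \<in> {0,2}) y \<noteq> [0,2,0]"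
    using filter_eq_rigid[OF s r, of "{0,2}"] by auto
  have "y \<in> set (arrangements (length [0,1,0,2::nat]) [0,1,0,2])"
    by (rule arrangements_from_cover[OF sy, of "[{0,1},{1,2}]"]) (use f01 f12 in auto)
  then show "y = [0,1,0,2]"
    by (rule unique_filter_result[where P = "\<lambda>y::nat list. filter (\<lambda>z. z \<in> {0,1}) y = [0,1,0] \<and>
     filter (\<lambda>z. z \<in> {1,2}) y = [1,2] \<and> filter (\<lambda>z. z \<in> {0,2}) y \<noteq> [0,2,0]"])
      (use f01 f12 ex in simp, code_simp)
qed

lemma rigid_abcb: "rigid S [0,1,2,1]"
  unfolding rigid_def
proof (intro allI impI)
  fix y assume s: "satisfies S [0,1,2,1] y"
  have sy: "set y \<subseteq> set [0,1,2,1::nat]" using satisfies_set_subset[OF s] by simp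
  have f12: "filter (\<lambda>z. z \<in> {1,2}) y = filter (\<lambda>z. z \<in> {1,2}) [0,1,2,1]"
    by (rule rigid_filter_eq[OF s]) (use rigid_map_nth[OF rigid_aba, of "[1,2]"] in simp)
  have f02: "filter (\<lambda>z. z \<in> {0,2}) y = filter (\<lambda>z. z \<in> {0,2}) [0,1,2,1]"
    by (rule rigid_filter_eq[OF s]) (use rigid_map_nth[OF rigid_ab, of "[0,2]"] in simp)
  have r: "rigid S [1,0,1]" using rigid_map_nth[OF rigid_aba, of "[1,0]"] by simp
  have ex: "filter (\<lambda>z. z \<in> {0,1}) y \<noteq> [1,0,1]"
    using filter_eq_rigid[OF s r, of "{0,1}"] by auto
  have "y \<in> set (arrangements (length [0,1,2,1::nat]) [0,1,2,1])"
    by (rule arrangements_from_cover[OF sy, of "[{1,2},{0,2}]"]) (use f12 f02 in auto)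
  then show "y = [0,1,2,1]"
    by (rule unique_filter_result[where P = "\<lambda>y::nat list. filter (\<lambda>z. z \<in> {1,2}) y = [1,2,1] \<and>
     filter (\<lambda>z. z \<in> {0,2}) y = [0,2] \<and> filter (\<lambda>z. z \<in> {0,1}) y \<noteq> [1,0,1]"])
      (use f12 f02 ex in simp, code_simp)
qed

lemma rigid_abcacd: "rigid S [0,1,2,0,2,3]"
  unfolding rigid_def
proof (intro allI impI)
  fix y assume s: "satisfies S [0,1,2,0,2,3] y"
  have sy: "set y \<subseteq> set [0,1,2,0,2,3::nat]" using satisfies_set_subset[OF s] by simp
  have f1: "filter (\<lambda>z. z \<in> {0,1,2}) y = filter (\<lambda>z. z \<in> {0,1,2}) [0,1,2,0,2,3]"
    by (rule rigid_filter_eq[OF s]) (use rigid_abcac in simp)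
  have f2: "filter (\<lambda>z. z \<in> {0,1,3}) y = filter (\<lambda>z. z \<in> {0,1,3}) [0,1,2,0,2,3]"
    by (rule rigid_filter_eq[OF s]) (use rigid_map_nth[OF rigid_abad, of "[0,1,3]"] in simp)
  have r: "rigid S [2,3,2]" using rigid_map_nth[OF rigid_aba, of "[2,3]"] by simp
  have ex: "filter (\<lambda>z. z \<in> {2,3}) y \<noteq> [2,3,2]"
    using filter_eq_rigid[OF s r, of "{2,3}"] by auto
  have "y \<in> set (arrangements (length [0,1,2,0,2,3::nat]) [0,1,2,0,2,3])"
    by (rule arrangements_from_cover[OF sy, of "[{0,1,2},{0,1,3}]"]) (use f1 f2 in auto)
  then show "y = [0,1,2,0,2,3]"
    by (rule unique_filter_result[where P = "\<lambda>y::nat list. filter (\<lambda>z. z \<in> {0,1,2}) y = [0,1,2,0,2] \<and>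
     filter (\<lambda>z. z \<in> {0,1,3}) y = [0,1,0,3] \<and> filter (\<lambda>z. z \<in> {2,3}) y \<noteq> [2,3,2]"])
      (use f1 f2 ex in simp, code_simp)
qed

lemma not_satisfies_abcab_bacab: "\<not> satisfies S [0,1,2,0,1] [1,0,2,0,1]"
proof
  assume s: "satisfies S [0,1,2,0,1] [1,0,2,0,1]"
  let ?f = "\<lambda>z::nat. if z = 0 then 1 else if z = 1 then 0 else z"
  have "satisfies S (map ?f [0,1,2,0,1]) (map ?f [1,0,2,0,1])" by (rule satisfies_map[OF s])
  then have "satisfies S [0,1,2,1,0] [1,0,2,1,0]" using satisfies_sym by simp
  then show False using rigidD[OF rigid_abcba] by fastforce
qed

lemma rigid_abcadb: "rigid S [0,1,2,0,3,1]"
  unfolding rigid_def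
proof (intro allI impI)
  fix y assume s: "satisfies S [0,1,2,0,3,1] y"
  have sy: "set y \<subseteq> set [0,1,2,0,3,1::nat]" using satisfies_set_subset[OF s] by simp
  have r1: "rigid S [0,2,0,3]" using rigid_map_nth[OF rigid_abad, of "[0,2,3]"] by simp
  have r2: "rigid S [1,2,1]" using rigid_map_nth[OF rigid_aba, of "[1,2]"] by simp
  have r3: "rigid S [1,3,1]" using rigid_map_nth[OF rigid_aba, of "[1,3]"] by simp
  have f1: "filter (\<lambda>z. z \<in> {0,2,3}) y = filter (\<lambda>z. z \<in> {0,2,3}) [0,1,2,0,3,1]"
    by (rule rigid_filter_eq[OF s]) (use r1 in simp)
  have f2: "filter (\<lambda>z. z \<in> {1,2}) y = filter (\<lambda>z. z \<in> {1,2}) [0,1,2,0,3,1]"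
    by (rule rigid_filter_eq[OF s]) (use r2 in simp)
  have f3: "filter (\<lambda>z. z \<in> {1,3}) y = filter (\<lambda>z. z \<in> {1,3}) [0,1,2,0,3,1]"
    by (rule rigid_filter_eq[OF s]) (use r3 in simp)
  have ex: "filter (\<lambda>z. z \<in> {0,1,2}) y \<noteq> [1,0,2,0,1]"
  proof
    assume "filter (\<lambda>z. z \<in> {0,1,2}) y = [1,0,2,0,1]"
    then have "satisfies S [0,1,2,0,1] [1,0,2,0,1]" using satisfies_filter[OF s, of "{0,1,2}"] by simp
    then show False using not_satisfies_abcab_bacab by simp
  qed
  have "y \<in> set (arrangements (length [0,1,2,0,3,1::nat]) [0,1,2,0,3,1])"
    by (rule arrangements_from_cover[OF sy, of "[{0,2,3},{1,2}]"]) (use f1 f2 in auto)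
  then show "y = [0,1,2,0,3,1]"
    by (rule unique_filter_result[where P = "\<lambda>y::nat list. filter (\<lambda>z. z \<in> {0,2,3}) y = [0,2,0,3] \<and>
     filter (\<lambda>z. z \<in> {1,2}) y = [1,2,1] \<and> filter (\<lambda>z. z \<in> {1,3}) y = [1,3,1] \<and>
     filter (\<lambda>z. z \<in> {0,1,2}) y \<noteq> [1,0,2,0,1]"])
      (use f1 f2 f3 ex in simp, code_simp)
qed

lemma rigid_abcdadeb: "rigid S [0,1,2,3,0,3,4,1]"
  unfolding rigid_def
proof (intro allI impI)
  fix y assume s: "satisfies S [0,1,2,3,0,3,4,1] y"
  have sy: "set y \<subseteq> set [0,1,2,3,0,3,4,1::nat]" using satisfies_set_subset[OF s] by simp
  have r1: "rigid S [0,1,2,0,4,1]" using rigid_map_nth[OF rigid_abcadb, of "[0,1,2,4]"] by simp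
  have r2: "rigid S [0,2,3,0,3,4]" using rigid_map_nth[OF rigid_abcacd, of "[0,2,3,4]"] by simp
  have f1: "filter (\<lambda>z. z \<in> {0,1,2,4}) y = filter (\<lambda>z. z \<in> {0,1,2,4}) [0,1,2,3,0,3,4,1]"
    by (rule rigid_filter_eq[OF s]) (use r1 in simp)
  have f2: "filter (\<lambda>z. z \<in> {0,2,3,4}) y = filter (\<lambda>z. z \<in> {0,2,3,4}) [0,1,2,3,0,3,4,1]"
    by (rule rigid_filter_eq[OF s]) (use r2 in simp)
  define z where "z = filter (\<lambda>z. z \<in> {1,2,3,4}) y"
  have zf: "filter (\<lambda>x. x \<in> B) z = filter (\<lambda>x. x \<in> B) y" if "B \<subseteq> {1,2,3,4}" for B
    unfolding z_def by (rule filter_filter_absorb) (use that in auto)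
  have g12: "filter (\<lambda>z. z \<in> {1,2}) y = [1,2,1]" using filter_eq_mono[OF f1, of "{1,2}"] by simp
  have g14: "filter (\<lambda>z. z \<in> {1,4}) y = [1,4,1]" using filter_eq_mono[OF f1, of "{1,4}"] by simp
  have g24: "filter (\<lambda>z. z \<in> {2,4}) y = [2,4]" using filter_eq_mono[OF f1, of "{2,4}"] by simp
  have g23: "filter (\<lambda>z. z \<in> {2,3}) y = [2,3,3]" using filter_eq_mono[OF f2, of "{2,3}"] by simp
  have g34: "filter (\<lambda>z. z \<in> {3,4}) y = [3,3,4]" using filter_eq_mono[OF f2, of "{3,4}"] by simp
  have h12: "filter (\<lambda>x. x \<in> {1,2}) z = [1,2,1]" using zf[of "{1,2}"] g12 by simp
  have h14: "filter (\<lambda>x. x \<in> {1,4}) z = [1,4,1]" using zf[of "{1,4}"] g14 by simp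
  have h24: "filter (\<lambda>x. x \<in> {2,4}) z = [2,4]" using zf[of "{2,4}"] g24 by simp
  have h23: "filter (\<lambda>x. x \<in> {2,3}) z = [2,3,3]" using zf[of "{2,3}"] g23 by simp
  have h34: "filter (\<lambda>x. x \<in> {3,4}) z = [3,3,4]" using zf[of "{3,4}"] g34 by simp
  have sz: "set z \<subseteq> set [1,2,3,3,4,1::nat]" using sy unfolding z_def by auto
  have "z \<in> set (arrangements (length [1,2,3,3,4,1::nat]) [1,2,3,3,4,1])"
    by (rule arrangements_from_cover[OF sz, of "[{1,2},{3,4}]"]) (use h12 h34 in auto)
  then have zz: "z = [1,2,3,3,4,1]"
    by (rule unique_filter_result[where P = "\<lambda>y::nat list. filter (\<lambda>z. z \<in> {1,2}) y = [1,2,1] \<and>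
     filter (\<lambda>z. z \<in> {1,4}) y = [1,4,1] \<and> filter (\<lambda>z. z \<in> {2,4}) y = [2,4] \<and>
     filter (\<lambda>z. z \<in> {2,3}) y = [2,3,3] \<and> filter (\<lambda>z. z \<in> {3,4}) y = [3,3,4]"])
      (use h12 h14 h24 h23 h34 in simp, code_simp)
  have f3: "filter (\<lambda>z. z \<in> {1,2,3,4}) y = filter (\<lambda>z. z \<in> {1,2,3,4}) [0,1,2,3,0,3,4,1]"
    using zz unfolding z_def by simp
  show "y = [0,1,2,3,0,3,4,1]"
    by (rule eq_from_pair_cover[OF sy, of "[{0,1,2,4},{0,2,3,4},{1,2,3,4}]"]) (use f1 f2 f3 in auto)
qed

lemma abcdadc_restriction_cd: "satisfies S [0,1,2,3,0,3,2] y \<Longrightarrow>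
   filter (\<lambda>z. z \<in> {2,3}) y = [2,3,3,2] \<or> filter (\<lambda>z. z \<in> {2,3}) y = [3,2,2,3]"
proof -
  assume s: "satisfies S [0,1,2,3,0,3,2] y"
  have sy: "set y \<subseteq> set [0,1,2,3,0,3,2::nat]" using satisfies_set_subset[OF s] by simp
  have r2: "rigid S [0,1,3,0,3]" using rigid_map_nth[OF rigid_abcac, of "[0,1,3]"] by simp
  have f1: "filter (\<lambda>z. z \<in> {0,1,2}) y = filter (\<lambda>z. z \<in> {0,1,2}) [0,1,2,3,0,3,2]"
    by (rule rigid_filter_eq[OF s]) (use rigid_abcac in simp)
  have f2: "filter (\<lambda>z. z \<in> {0,1,3}) y = filter (\<lambda>z. z \<in> {0,1,3}) [0,1,2,3,0,3,2]"
    by (rule rigid_filter_eq[OF s]) (use r2 in simp)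
  define z where "z = filter (\<lambda>z. z \<in> {0,2,3}) y"
  have sz0: "satisfies S [0,2,3,0,3,2] z" using satisfies_filter[OF s, of "{0,2,3}"] unfolding z_def by simp
  have zf: "filter (\<lambda>x. x \<in> B) z = filter (\<lambda>x. x \<in> B) y" if "B \<subseteq> {0,2,3}" for B
    unfolding z_def by (rule filter_filter_absorb) (use that in auto)
  have h02: "filter (\<lambda>x. x \<in> {0,2}) z = [0,2,0,2]" using zf[of "{0,2}"] filter_eq_mono[OF f1, of "{0,2}"] by simp
  have h03: "filter (\<lambda>x. x \<in> {0,3}) z = [0,3,0,3]" using zf[of "{0,3}"] filter_eq_mono[OF f2, of "{0,3}"] by simp
  have e1: "z \<noteq> [0,2,3,0,2,3]"
  proof
    assume "z = [0,2,3,0,2,3]"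
    then have "satisfies S [2,3,3,2] [2,3,2,3]" using satisfies_filter[OF sz0, of "{2,3}"] by simp
    from satisfies_map[OF this, of "\<lambda>x. x - 2"] have "satisfies S [0,1,1,0] [0,1,0,1]" by simp
    then show False using abab_not_abba satisfies_sym by blast
  qed
  have e2: "z \<noteq> [0,3,2,0,3,2]"
  proof
    assume "z = [0,3,2,0,3,2]"
    then have "satisfies S [0,3,2,0,2,3] [0,3,2,0,3,2]" using satisfies_trans[OF satisfies_sym[OF abcacb_identity] sz0] by simp
    then have "satisfies S [3,2,2,3] [3,2,3,2]" using satisfies_filter[of S _ _ "{2,3}"] by fastforce
    from satisfies_map[OF this, of "\<lambda>x. 3 - x"] have "satisfies S [0,1,1,0] [0,1,0,1]" by simp
    then show False using abab_not_abba satisfies_sym by blast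
  qed
  have szs: "set z \<subseteq> set [0,2,3,0,3,2::nat]" using sy unfolding z_def by auto
  have mem: "z \<in> set (arrangements (length [0,2,3,0,3,2::nat]) [0,2,3,0,3,2])"
    by (rule arrangements_from_cover[OF szs, of "[{0,2},{0,3}]"]) (use h02 h03 in auto)
  have filt: "filter (\<lambda>y::nat list. filter (\<lambda>z. z \<in> {0,2}) y = [0,2,0,2] \<and>
     filter (\<lambda>z. z \<in> {0,3}) y = [0,3,0,3] \<and> y \<noteq> [0,2,3,0,2,3] \<and> y \<noteq> [0,3,2,0,3,2])
     (arrangements (length [0,2,3,0,3,2::nat]) [0,2,3,0,3,2]) = [[0,3,2,0,2,3],[0,2,3,0,3,2]]" by code_simp
  have "z \<in> set [[0,3,2,0,2,3],[0,2,3,0,3,2]]"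
    by (rule mem_of_filter_eq[OF mem _ filt]) (use h02 h03 e1 e2 in simp)
  then have "z = [0,2,3,0,3,2] \<or> z = [0,3,2,0,2,3]" by auto
  moreover have "filter (\<lambda>x. x \<in> {2,3}) y = filter (\<lambda>x. x \<in> {2,3}) z" using zf[of "{2,3}"] by simp
  ultimately show ?thesis by auto
qed

lemma rigid_if_distinct: "distinct x \<Longrightarrow> rigid S x"
proof -
  assume d: "distinct x"
  show "rigid S x"
  proof (cases "\<exists>a\<in>set x. \<exists>b\<in>set x. a \<noteq> b")
    case False
    then show ?thesis
    proof (cases x)
      case Nil then show ?thesis using rigid_Nil by simp
    next
      case (Cons a x')
      then have "x' = []" using False d by (cases x') auto
      then show ?thesis using Cons rigid_map_nth[OF rigid_a, of "[a]"] by simp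
    qed
  next
    case True
    show ?thesis
    proof (rule rigid_if_pair_restrictions_rigid[OF True])
      fix a b assume ab: "a \<in> set x" "b \<in> set x" "a \<noteq> b"
      have "rigid S [a,b]" using rigid_map_nth[OF rigid_ab, of "[a,b]"] ab by simp
      moreover have "rigid S [b,a]" using rigid_map_nth[OF rigid_ab, of "[b,a]"] ab by simp
      ultimately have "rigid S (filter (\<lambda>z. z \<in> {a,b}) x)"
        using filter_distinct_two[OF d ab] by auto
      then show "\<exists>X. a \<in> X \<and> b \<in> X \<and> rigid S (filter (\<lambda>z. z \<in> X) x)" by blast
    qed
  qed
qed

lemma rigid_one_repeated_restriction:
  assumes d: "distinct (pre @ mid @ suf)" and dn: "\<delta> \<notin> set (pre @ mid @ suf)"
    and m0: "m0 \<in> set mid" and t: "t \<in> set (pre @ mid @ suf)"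
  shows "\<exists>X. \<delta> \<in> X \<and> t \<in> X \<and> rigid S (filter (\<lambda>z. z \<in> X) (pre @ \<delta> # mid @ \<delta> # suf))"
proof -
  let ?x = "pre @ \<delta> # mid @ \<delta> # suf"
  have dp: "distinct pre" "distinct mid" "distinct suf" using d by auto
  have disj: "set pre \<inter> set mid = {}" "set pre \<inter> set suf = {}" "set mid \<inter> set suf = {}" using d by auto
  have tn: "t \<noteq> \<delta>" and m0n: "m0 \<noteq> \<delta>" using t m0 dn by auto
  consider (pre) "t \<in> set pre" | (mid) "t \<in> set mid" | (suf) "t \<in> set suf" using t by auto
  then show ?thesis
  proof cases
    case pre
    have tm: "t \<noteq> m0" using pre m0 disj by auto
    have "filter (\<lambda>z. z \<in> {\<delta>,t,m0}) pre = [t]"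
      by (rule filter_distinct_one[OF dp(1)]) (use pre m0 disj dn in auto)
    moreover have "filter (\<lambda>z. z \<in> {\<delta>,t,m0}) mid = [m0]"
      by (rule filter_distinct_one[OF dp(2)]) (use pre m0 disj dn in auto)
    moreover have "filter (\<lambda>z. z \<in> {\<delta>,t,m0}) suf = []"
      by (rule filter_distinct_none) (use pre m0 disj dn in auto)
    ultimately have "filter (\<lambda>z. z \<in> {\<delta>,t,m0}) ?x = map (nth [t,\<delta>,m0]) [0,1,2,1]" by simp
    moreover have "rigid S (map (nth [t,\<delta>,m0]) [0,1,2,1])"
      by (rule rigid_map_nth[OF rigid_abcb]) (use tn m0n tm in auto)
    ultimately show ?thesis by (intro exI[of _ "{\<delta>,t,m0}"]) auto
  next
    case mid
    have "filter (\<lambda>z. z \<in> {\<delta>,t}) pre = []"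
      by (rule filter_distinct_none) (use mid disj dn in auto)
    moreover have "filter (\<lambda>z. z \<in> {\<delta>,t}) suf = []"
      by (rule filter_distinct_none) (use mid disj dn in auto)
    moreover have "filter (\<lambda>z. z \<in> {\<delta>,t}) mid = [t]"
      by (rule filter_distinct_one[OF dp(2)]) (use mid disj dn in auto)
    ultimately have "filter (\<lambda>z. z \<in> {\<delta>,t}) ?x = map (nth [\<delta>,t]) [0,1,0]" by simp
    moreover have "rigid S (map (nth [\<delta>,t]) [0,1,0])" by (rule rigid_map_nth[OF rigid_aba]) (use tn in auto)
    ultimately show ?thesis by (intro exI[of _ "{\<delta>,t}"]) auto
  next
    case suf
    have tm: "t \<noteq> m0" using suf m0 disj by auto
    have "filter (\<lambda>z. z \<in> {\<delta>,t,m0}) mid = [m0]"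
      by (rule filter_distinct_one[OF dp(2)]) (use suf m0 disj dn in auto)
    moreover have "filter (\<lambda>z. z \<in> {\<delta>,t,m0}) suf = [t]"
      by (rule filter_distinct_one[OF dp(3)]) (use suf m0 disj dn in auto)
    moreover have "filter (\<lambda>z. z \<in> {\<delta>,t,m0}) pre = []"
      by (rule filter_distinct_none) (use suf m0 disj dn in auto)
    ultimately have "filter (\<lambda>z. z \<in> {\<delta>,t,m0}) ?x = map (nth [\<delta>,m0,t]) [0,1,0,2]" by simp
    moreover have "rigid S (map (nth [\<delta>,m0,t]) [0,1,0,2])"
      by (rule rigid_map_nth[OF rigid_abad]) (use tn m0n tm in auto)
    ultimately show ?thesis by (intro exI[of _ "{\<delta>,t,m0}"]) auto
  qed
qed

lemma rigid_one_repeated: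
  assumes d: "distinct (pre @ mid @ suf)" and dn: "\<delta> \<notin> set (pre @ mid @ suf)" and m: "mid \<noteq> []"
  shows "rigid S (pre @ \<delta> # mid @ \<delta> # suf)"
proof (rule rigid_if_pair_restrictions_rigid)
  let ?x = "pre @ \<delta> # mid @ \<delta> # suf"
  obtain m0 where m0: "m0 \<in> set mid" using m by (cases mid) auto
  then show "\<exists>a\<in>set ?x. \<exists>b\<in>set ?x. a \<noteq> b" using dn by auto
  fix a b assume a: "a \<in> set ?x" and b: "b \<in> set ?x" and ab: "a \<noteq> b"
  show "\<exists>X. a \<in> X \<and> b \<in> X \<and> rigid S (filter (\<lambda>z. z \<in> X) ?x)"
  proof (cases "a = \<delta> \<or> b = \<delta>")
    case True
    then obtain t where t: "t \<in> set (pre @ mid @ suf)" and ab': "a = \<delta> \<and> b = t \<or> a = t \<and> b = \<delta>"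
      using a b ab by auto
    obtain X where "\<delta> \<in> X" "t \<in> X" "rigid S (filter (\<lambda>z. z \<in> X) ?x)"
      using rigid_one_repeated_restriction[OF d dn m0 t] by blast
    then show ?thesis using ab' by blast
  next
    case False
    then have a': "a \<in> set (pre @ mid @ suf)" and b': "b \<in> set (pre @ mid @ suf)" using a b by auto
    have "filter (\<lambda>z. z \<in> {a,b}) ?x = filter (\<lambda>z. z \<in> {a,b}) (pre @ mid @ suf)" using False by simp
    moreover have "rigid S [a,b]" "rigid S [b,a]" using rigid_map_nth[OF rigid_ab, of "[a,b]"]
      rigid_map_nth[OF rigid_ab, of "[b,a]"] ab by simp_all
    ultimately have "rigid S (filter (\<lambda>z. z \<in> {a,b}) ?x)"
      using filter_distinct_two[OF d a' b' ab] by auto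
    then show ?thesis by blast
  qed
qed

end

section \<open>Mirror words\<close>

declare filter_filter[simp del]

definition mirror_words :: "nat \<Rightarrow> word set" where
  "mirror_words n = {w. \<exists>P. w = 0 # P @ 0 # rev P \<and> distinct P \<and> set P = {2..<n+2} \<and> hd P = 2}"

definition mirror_pairs :: "nat \<Rightarrow> word \<Rightarrow> bool" where
  "mirror_pairs n w \<longleftrightarrow> set w \<subseteq> insert 0 {2..<n+2} \<and>
    (\<forall>c\<in>{2..<n+2}. filter (\<lambda>z. z \<in> {0,c}) w = [0,c,0,c]) \<and>
    (\<forall>c\<in>{2..<n+2}. \<forall>d\<in>{2..<n+2}. c \<noteq> d \<longrightarrow>
        filter (\<lambda>z. z \<in> {c,d}) w = [c,d,d,c] \<or> filter (\<lambda>z. z \<in> {c,d}) w = [d,c,c,d]) \<and>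
    (\<forall>c\<in>{2..<n+2}. c \<noteq> 2 \<longrightarrow> filter (\<lambda>z. z \<in> {2,c}) w = [2,c,c,2])"

lemma distinct_from_filter: "(\<And>c. c \<in> set P \<Longrightarrow> filter (\<lambda>z. z = c) P = [c]) \<Longrightarrow> distinct P"
proof (induction P)
  case Nil then show ?case by simp
next
  case (Cons a P)
  have "filter (\<lambda>z. z = a) (a # P) = [a]" using Cons.prems[of a] by simp
  then have an: "a \<notin> set P" by (auto simp: filter_empty_conv)
  have "distinct P"
  proof (rule Cons.IH)
    fix c assume c: "c \<in> set P"
    then have "c \<noteq> a" using an by auto
    then show "filter (\<lambda>z. z = c) P = [c]" using Cons.prems[of c] c by simp
  qed
  then show ?case using an by simp
qed

lemma mem_of_filter1: "filter (\<lambda>z. z = c) xs = [c] \<Longrightarrow> c \<in> set xs"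
  by (induction xs) (auto split: if_splits)

lemma split_zero: "xs @ (0::nat) # ys = [c,0,c] \<Longrightarrow> 0 \<notin> set xs \<Longrightarrow> c \<noteq> 0 \<Longrightarrow> xs = [c] \<and> ys = [c]"
  by (cases xs; cases "tl xs") (auto simp: Cons_eq_append_conv)

lemma mirror_pairs_split_at_0:
  assumes n: "n \<ge> 1" and g: "mirror_pairs n w"
  obtains P Q where "w = 0 # P @ 0 # Q" "set P \<subseteq> {2..<n+2}" "set Q \<subseteq> {2..<n+2}"
    "\<And>c. c \<in> {2..<n+2} \<Longrightarrow> filter (\<lambda>z. z = c) P = [c] \<and> filter (\<lambda>z. z = c) Q = [c]"
proof -
  let ?Y = "{2..<n+2::nat}"
  have sw: "set w \<subseteq> insert 0 ?Y" and g0: "\<And>c. c \<in> ?Y \<Longrightarrow> filter (\<lambda>z. z \<in> {0,c}) w = [0,c,0,c]"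
    using g unfolding mirror_pairs_def by auto
  have two: "2 \<in> ?Y" using n by auto
  have f02: "filter (\<lambda>z. z \<in> {0,2}) w = [0,2,0,2]" using g0[OF two] .
  obtain a r where w: "w = a # r" using f02 by (cases w) auto
  have a0: "a = 0"
  proof (rule ccontr)
    assume "a \<noteq> 0"
    then have "a \<in> ?Y" using sw w by auto
    then show False using g0[of a] w \<open>a \<noteq> 0\<close> by simp
  qed
  have "filter (\<lambda>z. z = 0) (filter (\<lambda>z. z \<in> {0,2}) w) = filter (\<lambda>z. z = 0) w"
    by (rule filter_filter_absorb) auto
  then have "filter (\<lambda>z. z = 0) w = [0,0]" unfolding f02 by simp
  then have r0: "filter (\<lambda>z. z = 0) r = [0]" using w a0 by simp
  then have "0 \<in> set r" by (rule mem_of_filter1)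
  from split_list_first[OF this] obtain P Q where r: "r = P @ 0 # Q" and P0: "0 \<notin> set P" by blast
  have "filter (\<lambda>z. z = 0) P = []" using P0 by (induction P) auto
  then have "filter (\<lambda>z. z = 0) Q = []" using r0 r by simp
  then have Q0: "0 \<notin> set Q" by (induction Q) (auto split: if_splits)
  have wPQ: "w = 0 # P @ 0 # Q" using w a0 r by simp
  have fc: "filter (\<lambda>z. z \<in> {0,c}) P = [c] \<and> filter (\<lambda>z. z \<in> {0,c}) Q = [c]" if c: "c \<in> ?Y" for c
  proof -
    have "filter (\<lambda>z. z \<in> {0,c}) P @ 0 # filter (\<lambda>z. z \<in> {0,c}) Q = [c,0,c]"
      using g0[OF c] wPQ by simp
    moreover have "0 \<notin> set (filter (\<lambda>z. z \<in> {0,c}) P)" using P0 by simp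
    moreover have "c \<noteq> 0" using c by simp
    ultimately show ?thesis using split_zero by blast
  qed
  have e: "filter (\<lambda>z. z = c) (filter (\<lambda>z. z \<in> {0,c}) t) = filter (\<lambda>z. z = c) t" for c t
    by (rule filter_filter_absorb) auto
  have "filter (\<lambda>z. z = c) P = [c] \<and> filter (\<lambda>z. z = c) Q = [c]" if "c \<in> ?Y" for c
    using e[of c P] e[of c Q] fc[OF that] by simp
  moreover have "set P \<subseteq> ?Y" "set Q \<subseteq> ?Y" using sw wPQ P0 Q0 by auto
  ultimately show ?thesis using that wPQ by blast
qed

lemma mirror_pairs_imp_mirror_words:
  assumes n: "n \<ge> 1" and g: "mirror_pairs n w"
  shows "w \<in> mirror_words n"
proof -
  let ?Y = "{2..<n+2::nat}"
  obtain P Q where wPQ: "w = 0 # P @ 0 # Q" and sP: "set P \<subseteq> ?Y" and sQ: "set Q \<subseteq> ?Y"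
    and fcP: "\<And>c. c \<in> ?Y \<Longrightarrow> filter (\<lambda>z. z = c) P = [c]"
    and fcQ: "\<And>c. c \<in> ?Y \<Longrightarrow> filter (\<lambda>z. z = c) Q = [c]"
    using mirror_pairs_split_at_0[OF n g] by metis
  have g1: "\<And>c d. c \<in> ?Y \<Longrightarrow> d \<in> ?Y \<Longrightarrow> c \<noteq> d \<Longrightarrow>
        filter (\<lambda>z. z \<in> {c,d}) w = [c,d,d,c] \<or> filter (\<lambda>z. z \<in> {c,d}) w = [d,c,c,d]"
    and g2: "\<And>c. c \<in> ?Y \<Longrightarrow> c \<noteq> 2 \<Longrightarrow> filter (\<lambda>z. z \<in> {2,c}) w = [2,c,c,2]"
    using g unfolding mirror_pairs_def by auto
  have two: "2 \<in> ?Y" using n by auto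
  have dP: "distinct P" by (rule distinct_from_filter) (use fcP sP in auto)
  have dQ: "distinct Q" by (rule distinct_from_filter) (use fcQ sQ in auto)
  have sP': "set P = ?Y" using sP mem_of_filter1[OF fcP] by auto
  have sQ': "set Q = ?Y" using sQ mem_of_filter1[OF fcQ] by auto
  have QP: "Q = rev P"
  proof (rule eq_if_pair_filters_eq[where A = ?Y])
    show "set Q \<union> set (rev P) \<subseteq> ?Y" using sP' sQ' by auto
    fix a b assume a: "a \<in> ?Y" and b: "b \<in> ?Y"
    show "filter (\<lambda>z. z = a \<or> z = b) Q = filter (\<lambda>z. z = a \<or> z = b) (rev P)"
    proof (cases "a = b")
      case True
      then show ?thesis using fcP[OF a] fcQ[OF a] by (simp add: rev_filter[symmetric])
    next
      case False
      have fw: "filter (\<lambda>z. z \<in> {a,b}) w = filter (\<lambda>z. z \<in> {a,b}) P @ filter (\<lambda>z. z \<in> {a,b}) Q"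
        using wPQ a b by simp
      have pP: "filter (\<lambda>z. z \<in> {a,b}) P = [a,b] \<or> filter (\<lambda>z. z \<in> {a,b}) P = [b,a]"
        by (rule filter_distinct_two[OF dP]) (use a b False sP' in auto)
      have pQ: "filter (\<lambda>z. z \<in> {a,b}) Q = [a,b] \<or> filter (\<lambda>z. z \<in> {a,b}) Q = [b,a]"
        by (rule filter_distinct_two[OF dQ]) (use a b False sQ' in auto)
      have "filter (\<lambda>z. z \<in> {a,b}) Q = rev (filter (\<lambda>z. z \<in> {a,b}) P)"
        using g1[OF a b False] fw pP pQ False by auto
      then show ?thesis by (simp add: rev_filter)
    qed
  qed
  have hP: "hd P = 2"
  proof (rule ccontr)
    assume h: "hd P \<noteq> 2"
    have "P \<noteq> []" using sP' two by auto
    then obtain p0 P' where P: "P = p0 # P'" by (cases P) auto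
    have p0: "p0 \<in> ?Y" "p0 \<noteq> 2" using sP' P h by auto
    have "filter (\<lambda>z. z \<in> {2,p0}) w = p0 # filter (\<lambda>z. z \<in> {2,p0}) (P' @ 0 # Q)"
      using wPQ P p0 by simp
    then show False using g2[OF p0] p0(2) by simp
  qed
  show ?thesis unfolding mirror_words_def using wPQ QP dP sP' hP by blast
qed

lemma mirror_words_imp_mirror_pairs:
  assumes "w \<in> mirror_words n"
  shows "mirror_pairs n w"
proof -
  obtain P where w: "w = 0 # P @ 0 # rev P" and d: "distinct P" and sP: "set P = {2..<n+2}"
    and h: "hd P = 2" using assms unfolding mirror_words_def by blast
  let ?Y = "{2..<n+2::nat}"
  have "set w \<subseteq> insert 0 ?Y" using w sP by auto
  moreover have "\<forall>c\<in>?Y. filter (\<lambda>z. z \<in> {0,c}) w = [0,c,0,c]"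
  proof
    fix c assume c: "c \<in> ?Y"
    have "filter (\<lambda>z. z \<in> {0,c}) P = [c]"
      by (rule filter_distinct_one[OF d]) (use c sP in auto)
    then show "filter (\<lambda>z. z \<in> {0,c}) w = [0,c,0,c]" using w by (simp add: rev_filter[symmetric])
  qed
  moreover have "\<forall>c\<in>?Y. \<forall>d\<in>?Y. c \<noteq> d \<longrightarrow>
        filter (\<lambda>z. z \<in> {c,d}) w = [c,d,d,c] \<or> filter (\<lambda>z. z \<in> {c,d}) w = [d,c,c,d]"
  proof (intro ballI impI)
    fix c e assume c: "c \<in> ?Y" and e: "e \<in> ?Y" and ce: "c \<noteq> e"
    have "filter (\<lambda>z. z \<in> {c,e}) P = [c,e] \<or> filter (\<lambda>z. z \<in> {c,e}) P = [e,c]"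
      by (rule filter_distinct_two[OF d]) (use c e sP ce in auto)
    moreover have "filter (\<lambda>z. z \<in> {c,e}) w = filter (\<lambda>z. z \<in> {c,e}) P @ rev (filter (\<lambda>z. z \<in> {c,e}) P)"
      using w c e by (simp add: rev_filter)
    ultimately show "filter (\<lambda>z. z \<in> {c,e}) w = [c,e,e,c] \<or> filter (\<lambda>z. z \<in> {c,e}) w = [e,c,c,e]" by auto
  qed
  moreover have "\<forall>c\<in>?Y. c \<noteq> 2 \<longrightarrow> filter (\<lambda>z. z \<in> {2,c}) w = [2,c,c,2]"
  proof (intro ballI impI)
    fix c assume c: "c \<in> ?Y" "c \<noteq> 2"
    have "c \<in> set P" using c(1) unfolding sP .
    then have "P \<noteq> []" by auto
    then obtain P' where P: "P = 2 # P'" using h by (cases P) auto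
    have "c \<in> set P" using c(1) unfolding sP .
    then have cP: "c \<in> set P'" using c(2) P by simp
    have dP': "distinct P'" "2 \<notin> set P'" using d P by auto
    have "{2,c} \<inter> set P' = {c}" using cP dP'(2) by blast
    then have "filter (\<lambda>z. z \<in> {2,c}) P' = [c]"
      by (rule filter_distinct_one[OF dP'(1)])
    then have "filter (\<lambda>z. z \<in> {2,c}) P = [2,c]" using P by simp
    then show "filter (\<lambda>z. z \<in> {2,c}) w = [2,c,c,2]" using w c by (simp add: rev_filter[symmetric])
  qed
  ultimately show ?thesis unfolding mirror_pairs_def by blast
qed

definition precedes :: "nat list \<Rightarrow> nat \<Rightarrow> nat \<Rightarrow> bool" where
  "precedes P c d \<longleftrightarrow> filter (\<lambda>z. z \<in> {c,d}) P = [c,d]"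

lemma precedes_mem: "precedes P c d \<Longrightarrow> c \<in> set P \<and> d \<in> set P"
proof -
  assume "precedes P c d"
  then have "set (filter (\<lambda>z. z \<in> {c,d}) P) = {c,d}" unfolding precedes_def by simp
  then show ?thesis by auto
qed

lemma precedes_neq: "distinct P \<Longrightarrow> precedes P c d \<Longrightarrow> c \<noteq> d"
proof
  assume d: "distinct P" and p: "precedes P c d" and e: "c = d"
  have "distinct (filter (\<lambda>z. z \<in> {c,d}) P)" using d by simp
  then show False using p e unfolding precedes_def by simp
qed

lemma precedes_total: "distinct P \<Longrightarrow> c \<in> set P \<Longrightarrow> d \<in> set P \<Longrightarrow> c \<noteq> d \<Longrightarrow> precedes P c d \<or> precedes P d c"
  unfolding precedes_def using filter_distinct_two[of P c d] by (auto simp: insert_commute)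

lemma precedes_asym: "distinct P \<Longrightarrow> precedes P c d \<Longrightarrow> \<not> precedes P d c"
proof
  assume d: "distinct P" and a: "precedes P c d" and b: "precedes P d c"
  have "c \<noteq> d" using precedes_neq[OF d a] .
  then show False using a b unfolding precedes_def by (simp add: insert_commute)
qed

lemma filter_precedes_chain:
  assumes d: "distinct P" and bc: "precedes P b c" and cd: "precedes P c d"
  shows "filter (\<lambda>z. z \<in> {b,c,d}) P = [b,c,d]"
proof -
  have ne: "b \<noteq> c" "c \<noteq> d" using precedes_neq[OF d] bc cd by auto
  have bd: "b \<noteq> d" using bc cd precedes_asym[OF d] by blast
  have mem: "b \<in> set P" "c \<in> set P" "d \<in> set P" using precedes_mem bc cd by auto
  let ?y = "filter (\<lambda>z. z \<in> {b,c,d}) P"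
  have dy: "distinct ?y" using d by simp
  have sy: "set ?y = {b,c,d}" using mem by auto
  have "length ?y = 3" using distinct_card[OF dy] sy ne bd by simp
  then obtain y1 y2 y3 where y: "?y = [y1,y2,y3]"
    by (auto simp: numeral_3_eq_3 length_Suc_conv)
  have "filter (\<lambda>z. z \<in> {b,c}) ?y = filter (\<lambda>z. z \<in> {b,c}) P"
    and "filter (\<lambda>z. z \<in> {c,d}) ?y = filter (\<lambda>z. z \<in> {c,d}) P"
    by (rule filter_filter_absorb, auto)+
  then have "filter (\<lambda>z. z \<in> {b,c}) ?y = [b,c]" "filter (\<lambda>z. z \<in> {c,d}) ?y = [c,d]"
    using bc cd unfolding precedes_def by simp_all
  then show ?thesis using y sy dy ne bd by (auto split: if_splits)
qed

lemma precedes_trans: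
  assumes d: "distinct P" and bc: "precedes P b c" and cd: "precedes P c d"
  shows "precedes P b d"
proof -
  have "b \<noteq> d" "b \<noteq> c" "c \<noteq> d" using bc cd precedes_asym[OF d] precedes_neq[OF d] by blast+
  moreover have "filter (\<lambda>z. z \<in> {b,d}) (filter (\<lambda>z. z \<in> {b,c,d}) P) = filter (\<lambda>z. z \<in> {b,d}) P"
    by (rule filter_filter_absorb) auto
  ultimately show ?thesis using filter_precedes_chain[OF assms] unfolding precedes_def by auto
qed

lemma count_subst: "count_list (subst \<sigma> u) l = (\<Sum>z\<in>set u. count_list u z * count_list (\<sigma> z) l)"
proof -
  have "count_list (subst \<sigma> u) l = sum_list (map (\<lambda>z. count_list (\<sigma> z) l) u)"
    by (induction u) auto
  then show ?thesis by (simp add: sum_list_map_eq_sum_count)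
qed

lemma count_subst_ge1: "z \<in> set u \<Longrightarrow> count_list (subst \<sigma> u) l \<ge> count_list u z * count_list (\<sigma> z) l"
  unfolding count_subst by (rule member_le_sum) auto

lemma count_subst_ge2: "z \<in> set u \<Longrightarrow> z' \<in> set u \<Longrightarrow> z \<noteq> z' \<Longrightarrow>
  count_list (subst \<sigma> u) l \<ge> count_list u z * count_list (\<sigma> z) l + count_list u z' * count_list (\<sigma> z') l"
proof -
  assume a: "z \<in> set u" "z' \<in> set u" "z \<noteq> z'"
  have "(\<Sum>y\<in>{z,z'}. count_list u y * count_list (\<sigma> y) l) \<le> (\<Sum>y\<in>set u. count_list u y * count_list (\<sigma> y) l)"
    by (rule sum_mono2) (use a in auto)
  then show ?thesis unfolding count_subst using a by simp
qed

lemma count_list_pos: "z \<in> set xs \<Longrightarrow> count_list xs z \<ge> 1"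
  by (induction xs) auto

lemma count_distinct: "distinct P \<Longrightarrow> count_list P l = (if l \<in> set P then 1 else 0)"
  by (induction P) auto

lemma split_first_unique: "xs @ a # ys = xs' @ a # ys' \<Longrightarrow> a \<notin> set xs \<Longrightarrow> a \<notin> set xs' \<Longrightarrow> xs = xs' \<and> ys = ys'"
proof (induction xs arbitrary: xs')
  case Nil then show ?case by (cases xs') auto
next
  case (Cons c xs) then show ?case by (cases xs') auto
qed

lemma hd_last_distinct: "distinct P \<Longrightarrow> length P \<ge> 2 \<Longrightarrow> hd P \<noteq> last P"
proof -
  assume d: "distinct P" and l: "length P \<ge> 2"
  obtain a P' where P: "P = a # P'" using l by (cases P) auto
  have "P' \<noteq> []" using l P by auto
  then have "last P = last P'" "last P' \<in> set P'" using P by auto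
  then show ?thesis using d P by auto
qed

lemma mirror_word_no_repeated_factor:
  assumes w: "A @ a # b # B @ a # b # C = 0 # P @ 0 # rev P"
    and d: "distinct P" and P0: "0 \<notin> set P" and l: "length P \<ge> 2"
    and aA: "a \<notin> set A" and aB: "a \<notin> set B" and aC: "a \<notin> set C" and ab: "a \<noteq> b"
  shows False
proof (cases "a = 0")
  case True
  have "A = []"
  proof (rule ccontr)
    assume "A \<noteq> []"
    then obtain a1 A' where "A = a1 # A'" by (cases A) auto
    then show False using w aA True by simp
  qed
  then have e: "(b # B) @ 0 # (b # C) = P @ 0 # rev P" using w True by simp
  have "b \<noteq> 0"
  proof
    assume "b = 0"
    have "P \<noteq> []" using l by auto
    then have "hd (P @ 0 # rev P) = hd P" by simp
    moreover from arg_cong[OF e, of hd] have "b = hd (P @ 0 # rev P)" by simp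
    ultimately have "hd P = 0" using \<open>b = 0\<close> by simp
    then show False using P0 \<open>P \<noteq> []\<close> by (metis list.set_sel(1))
  qed
  moreover have "0 \<notin> set B" using aB True by simp
  ultimately have "0 \<notin> set (b # B)" by simp
  with e
  have "b # B = P" "b # C = rev P" using split_first_unique[of "b # B" 0 "b # C" P "rev P"] P0 e \<open>0 \<notin> set (b # B)\<close> by auto
  then have "hd P = b" "last P = b" by (metis list.sel(1), metis hd_rev list.sel(1))
  then show False using hd_last_distinct[OF d l] by simp
next
  case False
  have "a \<in> set (0 # P @ 0 # rev P)" using w[symmetric] by simp
  then have aP: "a \<in> set P" using False by auto
  obtain P1 P2 where P: "P = P1 @ a # P2" using split_list[OF aP] by blast
  have a1: "a \<notin> set P1" "a \<notin> set P2" using d P by auto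
  have "(0 # P1) @ a # (P2 @ 0 # rev P2 @ a # rev P1) = A @ a # (b # B @ a # b # C)"
    using w P by simp
  then have e1: "0 # P1 = A" "P2 @ 0 # rev P2 @ a # rev P1 = b # B @ a # b # C"
    using split_first_unique[of "0 # P1" a _ A] a1 aA False by auto
  have "(P2 @ 0 # rev P2) @ a # rev P1 = (b # B) @ a # (b # C)" using e1(2) by simp
  then have e2: "P2 @ 0 # rev P2 = b # B" "rev P1 = b # C"
    using split_first_unique[of "P2 @ 0 # rev P2" a "rev P1" "b # B"] a1 aB ab False by auto
  have bP1: "b \<in> set P1" using e2(2) by (metis list.set_intros(1) set_rev)
  show False
  proof (cases P2)
    case Nil
    then have "b = 0" using e2(1) by simp
    then show False using bP1 P0 P by auto
  next
    case (Cons p2 P2')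
    then have "b = p2" using e2(1) by simp
    then show False using bP1 d P Cons by auto
  qed
qed

section \<open>Substitution instances of mirror words\<close>

lemma prefix_without_head: "ps @ r = l # T \<Longrightarrow> l \<notin> set ps \<Longrightarrow> ps = []"
  by (cases ps) auto

lemma prefix_without_second: "ps @ r = a # l # T \<Longrightarrow> l \<notin> set ps \<Longrightarrow> ps = [] \<or> ps = [a]"
  by (cases ps; cases "tl ps") auto

lemma suffix_without_last: "r @ qs = T @ [l] \<Longrightarrow> l \<notin> set qs \<Longrightarrow> qs = []"
proof -
  assume a: "r @ qs = T @ [l]" "l \<notin> set qs"
  have "rev qs @ rev r = l # rev T" using arg_cong[OF a(1), of rev] by simp
  then show ?thesis using prefix_without_head[of "rev qs"] a(2) by simp
qed

lemma suffix_without_second_last: "r @ qs = T @ [l, a] \<Longrightarrow> l \<notin> set qs \<Longrightarrow> qs = [] \<or> qs = [a]"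
proof -
  assume a: "r @ qs = T @ [l, a]" "l \<notin> set qs"
  have "rev qs @ rev r = a # l # rev T" using arg_cong[OF a(1), of rev] by simp
  then have "rev qs = [] \<or> rev qs = [a]" using prefix_without_second[of "rev qs"] a(2) by simp
  then show ?thesis by auto
qed

lemma no_square_if_successively: "successively (\<noteq>) xs \<Longrightarrow> xs \<noteq> A @ l # l # B"
  by (auto simp: successively_append_iff)

lemma distinct_if_count_le_1: "(\<And>z. z \<in> set x \<Longrightarrow> count_list x z \<le> 1) \<Longrightarrow> distinct x"
proof (induction x)
  case (Cons a x)
  have "count_list (a # x) a \<le> 1" using Cons.prems[of a] by simp
  then have "a \<notin> set x" by (simp add: count_list_0_iff)
  moreover have "distinct x"
  proof (rule Cons.IH)
    fix z assume "z \<in> set x"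
    then show "count_list x z \<le> 1" using Cons.prems[of z] by (simp split: if_splits)
  qed
  ultimately show ?case by simp
qed simp

lemma count_list_filter: "P z \<Longrightarrow> count_list (filter P x) z = count_list x z"
  by (induction x) auto

lemma filter_map_nth: "distinct ys \<Longrightarrow> set y' \<subseteq> {..<length ys} \<Longrightarrow> B \<subseteq> {..<length ys} \<Longrightarrow>
  filter (\<lambda>z. z \<in> nth ys ` B) (map (nth ys) y') = map (nth ys) (filter (\<lambda>z. z \<in> B) y')"
proof (induction y')
  case (Cons a y')
  have "(ys ! a \<in> nth ys ` B) = (a \<in> B)"
  proof
    assume "ys ! a \<in> nth ys ` B"
    then obtain b where b: "b \<in> B" "ys ! a = ys ! b" by auto
    then have "a = b" using Cons.prems nth_eq_iff_index_eq[of ys a b] by auto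
    then show "a \<in> B" using b by simp
  qed auto
  then show ?case using Cons by auto
qed simp

lemma abba_no_square_a: "c \<noteq> d \<Longrightarrow> [c,d,d,c] \<noteq> A @ c # c # B"
proof
  assume cd: "c \<noteq> d" and e: "[c,d,d,c] = A @ c # c # B"
  have "length A \<le> 2" using arg_cong[OF e, of length] by simp
  then consider "A = []" | a1 where "A = [a1]" | a1 a2 where "A = [a1,a2]"
    by (cases A; cases "tl A"; auto)
  then show False using e cd by cases auto
qed

locale mirror_instance = nfb_setting S for S :: "'a::monoid_mult itself" +
  fixes P p q u v :: word and \<sigma> :: "nat \<Rightarrow> word"
  assumes identity: "satisfies S u v"
    and dP: "distinct P" and P0: "0 \<notin> set P" and lP: "length P \<ge> 2"
    and wdef: "p @ subst \<sigma> u @ q = 0 # P @ 0 # rev P"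
    and nonerasing: "\<And>z. z \<in> set u \<Longrightarrow> \<sigma> z \<noteq> []"
    and few_vars: "card (set u) \<le> length P"
begin

abbreviation "w \<equiv> 0 # P @ 0 # rev P"
abbreviation "W \<equiv> subst \<sigma> u"
abbreviation "w' \<equiv> p @ subst \<sigma> v @ q"

lemma count_w: "count_list w l = (if l = 0 \<or> l \<in> set P then 2 else 0)"
proof -
  have "count_list P l = (if l \<in> set P then 1 else 0)" using dP by (rule count_distinct)
  then show ?thesis using P0 by auto
qed

lemma count_W_le_2: "count_list W l \<le> 2"
proof -
  have "count_list w l = count_list p l + count_list W l + count_list q l" using wdef[symmetric] by simp
  then show ?thesis using count_w[of l] by (simp split: if_splits)
qed

lemma count_u_le_2: "z \<in> set u \<Longrightarrow> count_list u z \<le> 2"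
proof -
  assume z: "z \<in> set u"
  obtain l r where "\<sigma> z = l # r" using nonerasing[OF z] by (cases "\<sigma> z") auto
  then have "count_list (\<sigma> z) l \<ge> 1" by simp
  then have "count_list W l \<ge> count_list u z * 1" using count_subst_ge1[OF z, of \<sigma> l]
    by (meson dual_order.trans mult_le_mono2)
  then show ?thesis using count_W_le_2[of l] by simp
qed

lemma repeated_var_image:
  assumes z: "z \<in> set u" and c2: "count_list u z \<ge> 2"
  shows "count_list u z = 2 \<and> (\<exists>c. \<sigma> z = [c])"
proof -
  have cz: "count_list u z = 2" using count_u_le_2[OF z] c2 by simp
  obtain a r where sz: "\<sigma> z = a # r" using nonerasing[OF z] by (cases "\<sigma> z") auto
  have "r = []"
  proof (rule ccontr)
    assume "r \<noteq> []"
    then obtain b r' where r: "r = b # r'" by (cases r) auto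
    have ba: "b \<noteq> a"
    proof
      assume "b = a"
      then have "count_list (\<sigma> z) a \<ge> 2" using sz r by simp
      then have "count_list W a \<ge> 2 * 2" using count_subst_ge1[OF z, of \<sigma> a] cz
        by (metis le_trans mult_le_mono2)
      then show False using count_W_le_2[of a] by simp
    qed
    obtain u1 u2 where u: "u = u1 @ z # u2" and z1: "z \<notin> set u1"
      using split_list_first[OF z] by blast
    have "count_list u2 z = 1" using cz u z1 by simp
    then have z2: "z \<in> set u2" by (metis count_notin zero_neq_one)
    obtain u3 u4 where u2: "u2 = u3 @ z # u4" using split_list[OF z2] by blast
    have weq: "(p @ subst \<sigma> u1) @ a # b # (r' @ subst \<sigma> u3) @ a # b # (r' @ subst \<sigma> u4 @ q) = w"
      using wdef u u2 sz r by simp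
    have "w = (p @ subst \<sigma> u1) @ a # b # (r' @ subst \<sigma> u3) @ a # b # (r' @ subst \<sigma> u4 @ q)"
      using weq by simp
    moreover have "count_list w a = count_list (p @ subst \<sigma> u1) a + count_list (r' @ subst \<sigma> u3) a
        + count_list (r' @ subst \<sigma> u4 @ q) a + 2"
      using calculation ba by simp
    moreover have "count_list w a \<le> 2" using count_w[of a] by simp
    ultimately have "a \<notin> set (p @ subst \<sigma> u1)" "a \<notin> set (r' @ subst \<sigma> u3)" "a \<notin> set (r' @ subst \<sigma> u4 @ q)"
      by (simp_all add: count_list_0_iff[symmetric])
    then show False using mirror_word_no_repeated_factor[OF weq dP P0 lP _ _ _ ba[symmetric]] by blast
  qed
  then show ?thesis using cz sz by auto
qed

definition doubled :: "nat \<Rightarrow> bool" where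
  "doubled l \<longleftrightarrow> (\<exists>z\<in>set u. count_list u z = 2 \<and> \<sigma> z = [l])"

text \<open>\<open>dvar l\<close> is meaningful only if \<open>doubled l\<close>; it is then unique by \<open>dvar_unique\<close>.\<close>

definition dvar :: "nat \<Rightarrow> nat" where
  "dvar l = (SOME z. z \<in> set u \<and> count_list u z = 2 \<and> \<sigma> z = [l])"

lemma dvar_spec: "doubled l \<Longrightarrow> dvar l \<in> set u \<and> count_list u (dvar l) = 2 \<and> \<sigma> (dvar l) = [l]"
  unfolding doubled_def dvar_def by (rule someI_ex) blast

lemma dvar_unique: "doubled l \<Longrightarrow> z \<in> set u \<Longrightarrow> l \<in> set (\<sigma> z) \<Longrightarrow> z = dvar l"
proof (rule ccontr)
  assume D: "doubled l" and z: "z \<in> set u" and l: "l \<in> set (\<sigma> z)" and ne': "z \<noteq> dvar l"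
  have dv: "dvar l \<in> set u" "count_list u (dvar l) = 2" "\<sigma> (dvar l) = [l]" using dvar_spec[OF D] by auto
  have f1: "count_list W l \<ge> count_list u (dvar l) * count_list (\<sigma> (dvar l)) l + count_list u z * count_list (\<sigma> z) l"
    using count_subst_ge2[OF dv(1) z] ne' by auto
  have m: "count_list u z * count_list (\<sigma> z) l \<ge> 1"
    using mult_le_mono[OF count_list_pos[OF z] count_list_pos[OF l]] by simp
  have t1: "count_list u (dvar l) * count_list (\<sigma> (dvar l)) l = 2" using dv by simp
  have "count_list W l \<ge> 2 + 1" using f1 m t1 by linarith
  then show False using count_W_le_2[of l] by simp
qed

lemma count_u_cases: "z \<in> set u \<Longrightarrow> count_list u z = 1 \<or> (count_list u z = 2 \<and> doubled (hd (\<sigma> z)) \<and> z = dvar (hd (\<sigma> z)))"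
proof -
  assume z: "z \<in> set u"
  have ge: "count_list u z \<ge> 1" using z by (rule count_list_pos)
  show ?thesis
  proof (cases "count_list u z \<ge> 2")
    case True
    obtain c where c: "\<sigma> z = [c]" and cz: "count_list u z = 2" using repeated_var_image[OF z True] by blast
    have D: "doubled c" unfolding doubled_def using z cz c by blast
    have "z = dvar c" by (rule dvar_unique[OF D z]) (simp add: c)
    then show ?thesis using cz D c by simp
  next
    case False then show ?thesis using ge by simp
  qed
qed

lemma count_W_doubled: "doubled l \<Longrightarrow> count_list W l = 2"
proof -
  assume D: "doubled l"
  have dv: "dvar l \<in> set u" "count_list u (dvar l) = 2" "\<sigma> (dvar l) = [l]" using dvar_spec[OF D] by auto
  have "count_list W l \<ge> 2 * 1" using count_subst_ge1[OF dv(1), of \<sigma> l] dv by simp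
  then show ?thesis using count_W_le_2[of l] by simp
qed

lemma doubled_notin_context: "doubled l \<Longrightarrow> l \<notin> set p \<and> l \<notin> set q"
proof -
  assume D: "doubled l"
  have "count_list w l = count_list p l + count_list W l + count_list q l" using wdef[symmetric] by simp
  then have "count_list w l = count_list p l + 2 + count_list q l" using count_W_doubled[OF D] by simp
  then show ?thesis using count_w[of l] by (auto simp: count_list_0_iff[symmetric] split: if_splits)
qed

lemma dvar_inj: "doubled l \<Longrightarrow> doubled l' \<Longrightarrow> dvar l = dvar l' \<Longrightarrow> l = l'"
proof -
  assume a: "doubled l" "doubled l'" "dvar l = dvar l'"
  have e1: "\<sigma> (dvar l) = [l]" using dvar_spec[OF a(1)] by blast
  have e2: "\<sigma> (dvar l') = [l']" using dvar_spec[OF a(2)] by blast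
  have "[l] = [l']" unfolding e1[symmetric] e2[symmetric] a(3) ..
  then show "l = l'" by simp
qed

lemma count_dvar: "doubled l \<Longrightarrow> count_list u (dvar l) = 2"
  using dvar_spec by blast

lemma linear_neq_dvar: "count_list u z = 1 \<Longrightarrow> doubled l \<Longrightarrow> z \<noteq> dvar l"
  using count_dvar by force

lemma mem_P_neq_0: "x \<in> set P \<Longrightarrow> x \<noteq> 0"
  using P0 by metis

lemma precedes_letters: "precedes P b c \<Longrightarrow> b \<noteq> c \<and> b \<noteq> 0 \<and> c \<noteq> 0"
  using precedes_neq[OF dP] precedes_mem mem_P_neq_0 by blast

lemma filter_w_with_0:
  assumes "filter (\<lambda>z. z \<in> B) P = Q"
  shows "filter (\<lambda>z. z \<in> insert 0 B) w = 0 # Q @ 0 # rev Q"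
proof -
  have e: "filter (\<lambda>z. z \<in> insert 0 B) P = Q"
    unfolding assms[symmetric] by (rule filter_cong) (use P0 in auto)
  then have "filter (\<lambda>z. z \<in> insert 0 B) (rev P) = rev Q" by (simp only: rev_filter[symmetric])
  then show ?thesis using e by simp
qed

lemma filter_w_without_0:
  assumes "0 \<notin> B" and "filter (\<lambda>z. z \<in> B) P = Q"
  shows "filter (\<lambda>z. z \<in> B) w = Q @ rev Q"
proof -
  have "filter (\<lambda>z. z \<in> B) (rev P) = rev Q" by (simp only: rev_filter[symmetric] assms(2))
  then show ?thesis using assms by simp
qed

definition sigma_on :: "nat set \<Rightarrow> nat \<Rightarrow> word" where
  "sigma_on L z = filter (\<lambda>y. y \<in> L) (\<sigma> z)"

definition u_on :: "nat set \<Rightarrow> word" where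
  "u_on L = filter (\<lambda>z. z \<in> {z. sigma_on L z \<noteq> []}) u"

lemma filter_subst_sigma: "filter (\<lambda>y. y \<in> L) (subst \<sigma> x) = subst (sigma_on L) x"
  by (simp add: filter_subst sigma_on_def[abs_def])

lemma subst_sigma_on_u_on: "subst (sigma_on L) (u_on L) = filter (\<lambda>y. y \<in> L) W"
  unfolding u_on_def filter_subst_sigma by (rule subst_filter_support) auto

lemma filter_w_split:
  "filter (\<lambda>y. y \<in> L) p @ filter (\<lambda>y. y \<in> L) W @ filter (\<lambda>y. y \<in> L) q = filter (\<lambda>y. y \<in> L) w"
  using arg_cong[OF wdef, of "filter (\<lambda>y. y \<in> L)"] by simp

lemma successively_filter_W:
  "successively (\<noteq>) (filter (\<lambda>y. y \<in> L) w) \<Longrightarrow> successively (\<noteq>) (filter (\<lambda>y. y \<in> L) W)"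
  unfolding filter_w_split[symmetric] by (simp add: successively_append_iff)

lemma u_on_memD: "z \<in> set (u_on L) \<Longrightarrow> z \<in> set u \<and> sigma_on L z \<noteq> []"
  unfolding u_on_def by auto

lemma count_u_on: "z \<in> set (u_on L) \<Longrightarrow> count_list (u_on L) z = count_list u z"
  unfolding u_on_def by (rule count_list_filter) auto

lemma filter_u_eq_filter_u_on:
  assumes "X \<subseteq> set (u_on L)"
  shows "filter (\<lambda>z. z \<in> X) u = filter (\<lambda>z. z \<in> X) (u_on L)"
  unfolding u_on_def by (rule filter_filter_absorb[symmetric]) (use assms u_on_memD in blast)

lemma sigma_on_dvar: "doubled l \<Longrightarrow> l \<in> L \<Longrightarrow> sigma_on L (dvar l) = [l]"
  using dvar_spec unfolding sigma_on_def by simp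

lemma pair_preserved_if_rigid:
  assumes r: "rigid S (filter (\<lambda>z. z \<in> X) u)"
    and sub: "\<And>z. z \<in> set u \<Longrightarrow> sigma_on {a,b} z \<noteq> [] \<Longrightarrow> z \<in> X"
  shows "filter (\<lambda>y. y \<in> {a,b}) w' = filter (\<lambda>y. y \<in> {a,b}) w"
proof -
  have fX: "filter (\<lambda>z. z \<in> X) v = filter (\<lambda>z. z \<in> X) u" by (rule rigid_filter_eq[OF identity r])
  have sv: "set v \<subseteq> set u" using satisfies_set_subset[OF identity] .
  have "subst (sigma_on {a,b}) v = subst (sigma_on {a,b}) (filter (\<lambda>z. z \<in> X) v)"
    by (rule subst_filter_support[symmetric]) (use sv sub in auto)
  also have "\<dots> = subst (sigma_on {a,b}) u" unfolding fX by (rule subst_filter_support) (use sub in auto)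
  finally have "filter (\<lambda>y. y \<in> {a,b}) (subst \<sigma> v) = filter (\<lambda>y. y \<in> {a,b}) W"
    unfolding filter_subst_sigma .
  then show ?thesis unfolding filter_w_split[symmetric] by simp
qed

lemma pair_preserved_if_rigid_u_on:
  assumes r: "rigid S (u_on L)" and ab: "a \<in> L" "b \<in> L"
  shows "filter (\<lambda>y. y \<in> {a,b}) w' = filter (\<lambda>y. y \<in> {a,b}) w"
proof (rule pair_preserved_if_rigid[where X = "{z. sigma_on L z \<noteq> []}"])
  show "rigid S (filter (\<lambda>z. z \<in> {z. sigma_on L z \<noteq> []}) u)" using r unfolding u_on_def .
  fix z assume "z \<in> set u" "sigma_on {a,b} z \<noteq> []"
  then show "z \<in> {z. sigma_on L z \<noteq> []}" using ab unfolding sigma_on_def by (auto simp: filter_empty_conv)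
qed

lemma doubled_pair_preserved_if_rigid:
  assumes "doubled a" "doubled b" "rigid S (filter (\<lambda>z. z \<in> X) u)" "dvar a \<in> X" "dvar b \<in> X"
  shows "filter (\<lambda>y. y \<in> {a,b}) w' = filter (\<lambda>y. y \<in> {a,b}) w"
proof (rule pair_preserved_if_rigid[OF assms(3)])
  fix z assume "z \<in> set u" "sigma_on {a,b} z \<noteq> []"
  then show "z \<in> X" using assms dvar_unique unfolding sigma_on_def by (auto simp: filter_empty_conv)
qed

lemma u_on_var_cases:
  assumes z: "z \<in> set (u_on L)"
  shows "count_list u z = 1 \<or> (\<exists>l\<in>L. doubled l \<and> z = dvar l \<and> sigma_on L z = [l])"
proof -
  have zu: "z \<in> set u" and t: "sigma_on L z \<noteq> []" using u_on_memD[OF z] by auto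
  from count_u_cases[OF zu] show ?thesis
  proof
    assume c: "count_list u z = 2 \<and> doubled (hd (\<sigma> z)) \<and> z = dvar (hd (\<sigma> z))"
    then have "\<sigma> z = [hd (\<sigma> z)]" using dvar_spec by metis
    then have "hd (\<sigma> z) \<in> L" "sigma_on L z = [hd (\<sigma> z)]"
      using t unfolding sigma_on_def by (metis filter.simps empty_filter_conv list.set_intros(1) set_ConsD)+
    then show ?thesis using c by blast
  qed simp
qed

lemma rigid_u_on_undoubled:
  assumes "\<And>l. l \<in> L \<Longrightarrow> \<not> doubled l"
  shows "rigid S (u_on L)"
proof (rule rigid_if_distinct, rule distinct_if_count_le_1)
  fix z assume z: "z \<in> set (u_on L)"
  then show "count_list (u_on L) z \<le> 1" using u_on_var_cases[OF z] count_u_on[OF z] assms by auto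
qed

text \<open>With a single doubled letter \<open>l\<close>, \<open>u_on L\<close> has the shape \<open>x t x y\<close> with \<open>x\<close> the only
  repeated variable; \<open>t\<close> is nonempty because \<open>l l\<close> is not a factor.\<close>

lemma rigid_u_on_one_doubled:
  assumes l: "l \<in> L" "doubled l" and only: "\<And>l'. l' \<in> L \<Longrightarrow> doubled l' \<Longrightarrow> l' = l"
    and no_square: "\<And>A B. filter (\<lambda>y. y \<in> L) W \<noteq> A @ l # l # B"
  shows "rigid S (u_on L)"
proof -
  let ?x = "u_on L" and ?d = "dvar l"
  have dv: "?d \<in> set u" "count_list u ?d = 2" "\<sigma> ?d = [l]" using dvar_spec[OF l(2)] by auto
  have dx: "?d \<in> set ?x" unfolding u_on_def sigma_on_def using dv l(1) by auto
  have cd: "count_list ?x ?d = 2" using count_u_on[OF dx] dv by simp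
  have other: "count_list ?x z = 1" if "z \<in> set ?x" "z \<noteq> ?d" for z
    using u_on_var_cases[OF that(1)] only that count_u_on[OF that(1)] by auto
  obtain pre r1 where x1: "?x = pre @ ?d # r1" and p1: "?d \<notin> set pre"
    using split_list_first[OF dx] by blast
  have "count_list r1 ?d = 1" using cd x1 p1 by simp
  then have "?d \<in> set r1" by (metis count_notin zero_neq_one)
  from split_list_first[OF this] obtain mid suf where r1: "r1 = mid @ ?d # suf" and p2: "?d \<notin> set mid"
    by blast
  have "count_list suf ?d = 0" using cd x1 p1 r1 p2 by simp
  then have p3: "?d \<notin> set suf" by (simp add: count_list_0_iff)
  have x: "?x = pre @ ?d # mid @ ?d # suf" using x1 r1 by simp
  have dist: "distinct (pre @ mid @ suf)"
  proof (rule distinct_if_count_le_1)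
    fix z assume z: "z \<in> set (pre @ mid @ suf)"
    then have "z \<noteq> ?d" "z \<in> set ?x" using p1 p2 p3 x by auto
    then show "count_list (pre @ mid @ suf) z \<le> 1" using other x by fastforce
  qed
  have mid: "mid \<noteq> []"
  proof
    assume "mid = []"
    then have "filter (\<lambda>y. y \<in> L) W = subst (sigma_on L) pre @ l # l # subst (sigma_on L) suf"
      using subst_sigma_on_u_on[of L, symmetric] x dv l(1) by (simp add: sigma_on_def)
    then show False using no_square by blast
  qed
  show ?thesis unfolding x by (rule rigid_one_repeated[OF dist _ mid]) (use p1 p2 p3 in auto)
qed

text \<open>If all letters of \<open>L\<close> but \<open>b\<close> are doubled, each variable of \<open>u_on L\<close> contributes exactly
  one letter to \<open>filter L W\<close>, so \<open>u_on L\<close> can be read off from it letter by letter.\<close>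

lemma u_on_decode:
  assumes nb: "\<not> doubled b" and others: "\<And>l. l \<in> L \<Longrightarrow> l \<noteq> b \<Longrightarrow> doubled l"
    and no_square: "\<And>A B. filter (\<lambda>y. y \<in> L) W \<noteq> A @ b # b # B"
  shows "list_all2 (\<lambda>z l. if l = b then count_list u z = 1 else z = dvar l)
    (u_on L) (filter (\<lambda>y. y \<in> L) W)"
proof -
  let ?R = "\<lambda>z l. if l = b then count_list u z = 1 else z = dvar l"
  have single: "sigma_on L z = [hd (sigma_on L z)] \<and> ?R z (hd (sigma_on L z))"
    if z: "z \<in> set (u_on L)" for z
    using u_on_var_cases[OF z]
  proof
    assume c1: "count_list u z = 1"
    have zu: "z \<in> set u" and t: "sigma_on L z \<noteq> []" using u_on_memD[OF z] by auto
    have all_b: "y = b" if y: "y \<in> set (sigma_on L z)" for y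
    proof (rule ccontr)
      assume "y \<noteq> b"
      then have D: "doubled y" using others y unfolding sigma_on_def by auto
      have "z = dvar y" by (rule dvar_unique[OF D zu]) (use y in \<open>simp add: sigma_on_def\<close>)
      then show False using count_dvar[OF D] c1 by simp
    qed
    obtain t1 tr where tz: "sigma_on L z = t1 # tr" using t by (cases "sigma_on L z") auto
    have "tr = []"
    proof (rule ccontr)
      assume "tr \<noteq> []"
      then obtain t2 tr' where tr: "tr = t2 # tr'" by (cases tr) auto
      obtain x1 x2 where "u_on L = x1 @ z # x2" using split_list[OF z] by blast
      then have "filter (\<lambda>y. y \<in> L) W = subst (sigma_on L) x1 @ b # b # (tr' @ subst (sigma_on L) x2)"
        using subst_sigma_on_u_on[of L, symmetric] tz tr all_b by simp
      then show False using no_square by blast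
    qed
    then show ?thesis using tz all_b c1 by simp
  next
    assume "\<exists>l\<in>L. doubled l \<and> z = dvar l \<and> sigma_on L z = [l]"
    then show ?thesis using nb by auto
  qed
  have "filter (\<lambda>y. y \<in> L) W = subst (\<lambda>z. [hd (sigma_on L z)]) (u_on L)"
    unfolding subst_sigma_on_u_on[symmetric] by (rule subst_cong) (use single in blast)
  then have "filter (\<lambda>y. y \<in> L) W = map (\<lambda>z. hd (sigma_on L z)) (u_on L)"
    by (simp add: subst_singleton)
  moreover have "list_all2 ?R (u_on L) (map (\<lambda>z. hd (sigma_on L z)) (u_on L))"
    unfolding list.rel_map by (rule list.rel_refl_strong) (use single in blast)
  ultimately show ?thesis by simp
qed

lemma linear_vars_distinct:
  assumes x: "u_on L = A @ x # B @ y # C" and lin: "count_list u x = 1"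
  shows "x \<noteq> y"
proof
  assume "x = y"
  then have "count_list (u_on L) x \<ge> 2" using x by simp
  moreover have "x \<in> set (u_on L)" using x by simp
  ultimately show False using count_u_on lin by fastforce
qed

lemma pair_preserved_undoubled: "\<not> doubled a \<Longrightarrow> \<not> doubled b \<Longrightarrow>
  filter (\<lambda>y. y \<in> {a,b}) w' = filter (\<lambda>y. y \<in> {a,b}) w"
  using pair_preserved_if_rigid_u_on[OF rigid_u_on_undoubled[of "{a,b}"]] by blast

lemma pair_preserved_one_doubled:
  assumes "a \<in> L" "b \<in> L" "l \<in> L" "doubled l" "\<And>l'. l' \<in> L \<Longrightarrow> doubled l' \<Longrightarrow> l' = l"
    and "\<And>A B. filter (\<lambda>y. y \<in> L) W \<noteq> A @ l # l # B"
  shows "filter (\<lambda>y. y \<in> {a,b}) w' = filter (\<lambda>y. y \<in> {a,b}) w"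
  using pair_preserved_if_rigid_u_on[OF rigid_u_on_one_doubled] assms by metis

lemma filter_w'_doubled_pair:
  assumes Dc: "doubled c" and Dd: "doubled d"
  shows "filter (\<lambda>y. y \<in> {c,d}) w' = subst (sigma_on {c,d}) (filter (\<lambda>z. z \<in> {dvar c, dvar d}) v)"
proof -
  have sv: "set v \<subseteq> set u" using satisfies_set_subset[OF identity] .
  have "subst (sigma_on {c,d}) (filter (\<lambda>z. z \<in> {dvar c, dvar d}) v) = subst (sigma_on {c,d}) v"
    by (rule subst_filter_support)
      (use sv dvar_unique[OF Dc] dvar_unique[OF Dd] in \<open>auto simp: sigma_on_def filter_empty_conv\<close>)
  moreover have "filter (\<lambda>y. y \<in> {c,d}) p = []" "filter (\<lambda>y. y \<in> {c,d}) q = []"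
    using doubled_notin_context[OF Dc] doubled_notin_context[OF Dd] by (auto simp: filter_empty_conv)
  ultimately show ?thesis using filter_subst_sigma[of "{c,d}" v] by simp
qed

lemma pairs_preserved_0_linear_doubled:
  assumes D0: "doubled 0" and nb: "\<not> doubled b" and Dc: "doubled c" and bc: "precedes P b c"
    and a: "a \<in> {0,b,c}" "a' \<in> {0,b,c}"
  shows "filter (\<lambda>y. y \<in> {a,a'}) w' = filter (\<lambda>y. y \<in> {a,a'}) w"
proof -
  let ?L = "{0,b,c}" and ?e = "dvar 0" and ?g = "dvar c"
  have ne: "b \<noteq> c" "b \<noteq> 0" "c \<noteq> 0" using precedes_letters[OF bc] by auto
  have T: "filter (\<lambda>y. y \<in> ?L) w = [0,b,c,0,c,b]"
    using filter_w_with_0[of "{b,c}"] bc unfolding precedes_def by simp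
  then have split: "filter (\<lambda>y. y \<in> ?L) p @ filter (\<lambda>y. y \<in> ?L) W @ filter (\<lambda>y. y \<in> ?L) q = [0,b,c,0,c,b]"
    using filter_w_split[of ?L] by simp
  have pq: "0 \<notin> set p" "c \<notin> set q" using doubled_notin_context D0 Dc by auto
  have "filter (\<lambda>y. y \<in> ?L) p = []" by (rule prefix_without_head[of _ _ 0]) (use split pq in auto)
  moreover have "filter (\<lambda>y. y \<in> ?L) q = [] \<or> filter (\<lambda>y. y \<in> ?L) q = [b]"
    by (rule suffix_without_second_last[of "filter (\<lambda>y. y \<in> ?L) p @ filter (\<lambda>y. y \<in> ?L) W" _ "[0,b,c,0]" c])
      (use split pq in auto)
  ultimately have W: "filter (\<lambda>y. y \<in> ?L) W = [0,b,c,0,c,b] \<or> filter (\<lambda>y. y \<in> ?L) W = [0,b,c,0,c]"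
    using split by auto
  have "successively (\<noteq>) (filter (\<lambda>y. y \<in> ?L) W)" by (rule successively_filter_W) (use T ne in simp)
  then have dec: "list_all2 (\<lambda>z l. if l = b then count_list u z = 1 else z = dvar l)
      (u_on ?L) (filter (\<lambda>y. y \<in> ?L) W)"
    by (intro u_on_decode nb no_square_if_successively) (use D0 Dc in auto)
  have eg: "?e \<noteq> ?g" using dvar_inj[OF D0 Dc] ne by auto
  from W have "rigid S (u_on ?L)"
  proof
    assume "filter (\<lambda>y. y \<in> ?L) W = [0,b,c,0,c,b]"
    with dec obtain x1 x5 where x: "u_on ?L = [?e, x1, ?g, ?e, ?g, x5]"
      and l: "count_list u x1 = 1" "count_list u x5 = 1"
      using ne by (auto simp: list_all2_Cons2)
    have "x1 \<noteq> x5" by (rule linear_vars_distinct[of ?L "[?e]" _ "[?g, ?e, ?g]" _ "[]"]) (use x l in simp_all)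
    then show ?thesis
      using rigid_map_nth[OF rigid_abcacd, of "[?e, x1, ?g, x5]"] x l eg
        linear_neq_dvar[OF _ D0] linear_neq_dvar[OF _ Dc] by auto
  next
    assume "filter (\<lambda>y. y \<in> ?L) W = [0,b,c,0,c]"
    with dec obtain x1 where x: "u_on ?L = [?e, x1, ?g, ?e, ?g]" and l: "count_list u x1 = 1"
      using ne by (auto simp: list_all2_Cons2)
    then show ?thesis
      using rigid_map_nth[OF rigid_abcac, of "[?e, x1, ?g]"] eg
        linear_neq_dvar[OF _ D0] linear_neq_dvar[OF _ Dc] by auto
  qed
  then show ?thesis by (rule pair_preserved_if_rigid_u_on) (use a in auto)
qed

lemma pairs_preserved_0_doubled_linear:
  assumes D0: "doubled 0" and Dc: "doubled c" and nb: "\<not> doubled b" and cb: "precedes P c b"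
    and a: "a \<in> {0,c,b}" "a' \<in> {0,c,b}"
  shows "filter (\<lambda>y. y \<in> {a,a'}) w' = filter (\<lambda>y. y \<in> {a,a'}) w"
proof -
  let ?L = "{0,c,b}" and ?e = "dvar 0" and ?g = "dvar c"
  have ne: "c \<noteq> b" "b \<noteq> 0" "c \<noteq> 0" using precedes_letters[OF cb] by auto
  have T: "filter (\<lambda>y. y \<in> ?L) w = [0,c,b,0,b,c]"
    using filter_w_with_0[of "{c,b}"] cb unfolding precedes_def by simp
  then have split: "filter (\<lambda>y. y \<in> ?L) p @ filter (\<lambda>y. y \<in> ?L) W @ filter (\<lambda>y. y \<in> ?L) q = [0,c,b,0,b,c]"
    using filter_w_split[of ?L] by simp
  have pq: "0 \<notin> set p" "c \<notin> set q" using doubled_notin_context D0 Dc by auto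
  have "filter (\<lambda>y. y \<in> ?L) p = []" by (rule prefix_without_head[of _ _ 0]) (use split pq in auto)
  moreover have "filter (\<lambda>y. y \<in> ?L) q = []"
    by (rule suffix_without_last[of "filter (\<lambda>y. y \<in> ?L) p @ filter (\<lambda>y. y \<in> ?L) W" _ "[0,c,b,0,b]" c])
      (use split pq in auto)
  ultimately have W: "filter (\<lambda>y. y \<in> ?L) W = [0,c,b,0,b,c]" using split by simp
  have "successively (\<noteq>) (filter (\<lambda>y. y \<in> ?L) W)" by (rule successively_filter_W) (use T ne in simp)
  then have "list_all2 (\<lambda>z l. if l = b then count_list u z = 1 else z = dvar l)
      (u_on ?L) (filter (\<lambda>y. y \<in> ?L) W)"
    by (intro u_on_decode nb no_square_if_successively) (use D0 Dc in auto)
  with W obtain x2 x4 where x: "u_on ?L = [?e, ?g, x2, ?e, x4, ?g]"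
    and l: "count_list u x2 = 1" "count_list u x4 = 1"
    using ne by (auto simp: list_all2_Cons2)
  have "x2 \<noteq> x4" by (rule linear_vars_distinct[of ?L "[?e, ?g]" _ "[?e]" _ "[?g]"]) (use x l in simp_all)
  then have "rigid S (u_on ?L)"
    using rigid_map_nth[OF rigid_abcadb, of "[?e, ?g, x2, x4]"] x l dvar_inj[OF D0 Dc] ne
      linear_neq_dvar[OF _ D0] linear_neq_dvar[OF _ Dc] by auto
  then show ?thesis by (rule pair_preserved_if_rigid_u_on) (use a in auto)
qed

lemma doubled_pair_preserved_0_linear:
  assumes n0: "\<not> doubled 0" and Dc: "doubled c" and Dd: "doubled d" and cd: "precedes P c d"
  shows "filter (\<lambda>y. y \<in> {c,d}) w' = filter (\<lambda>y. y \<in> {c,d}) w"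
proof -
  let ?L = "{0,c,d}" and ?g = "dvar c" and ?h = "dvar d"
  have ne: "c \<noteq> d" "c \<noteq> 0" "d \<noteq> 0" using precedes_letters[OF cd] by auto
  have T: "filter (\<lambda>y. y \<in> ?L) w = [0,c,d,0,d,c]"
    using filter_w_with_0[of "{c,d}"] cd unfolding precedes_def by simp
  then have split: "filter (\<lambda>y. y \<in> ?L) p @ filter (\<lambda>y. y \<in> ?L) W @ filter (\<lambda>y. y \<in> ?L) q = [0,c,d,0,d,c]"
    using filter_w_split[of ?L] by simp
  have pq: "c \<notin> set p" "c \<notin> set q" using doubled_notin_context Dc by auto
  have "filter (\<lambda>y. y \<in> ?L) p = [] \<or> filter (\<lambda>y. y \<in> ?L) p = [0]"
    by (rule prefix_without_second[of _ _ 0 c]) (use split pq in auto)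
  moreover have "filter (\<lambda>y. y \<in> ?L) q = []"
    by (rule suffix_without_last[of "filter (\<lambda>y. y \<in> ?L) p @ filter (\<lambda>y. y \<in> ?L) W" _ "[0,c,d,0,d]" c])
      (use split pq in auto)
  ultimately have W: "filter (\<lambda>y. y \<in> ?L) W = [0,c,d,0,d,c] \<or> filter (\<lambda>y. y \<in> ?L) W = [c,d,0,d,c]"
    using split by auto
  have "successively (\<noteq>) (filter (\<lambda>y. y \<in> ?L) W)" by (rule successively_filter_W) (use T ne in simp)
  then have dec: "list_all2 (\<lambda>z l. if l = 0 then count_list u z = 1 else z = dvar l)
      (u_on ?L) (filter (\<lambda>y. y \<in> ?L) W)"
    by (intro u_on_decode n0 no_square_if_successively) (use Dc Dd in auto)
  have gh: "?g \<noteq> ?h" using dvar_inj[OF Dc Dd] ne by auto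
  from W obtain t where lt: "count_list u t = 1"
    and ft: "filter (\<lambda>z. z \<in> {?g, ?h, t}) u = [?g, ?h, t, ?h, ?g]"
  proof
    assume "filter (\<lambda>y. y \<in> ?L) W = [0,c,d,0,d,c]"
    with dec obtain x0 x3 where x: "u_on ?L = [x0, ?g, ?h, x3, ?h, ?g]"
      and l: "count_list u x0 = 1" "count_list u x3 = 1"
      using ne by (auto simp: list_all2_Cons2)
    have "x0 \<noteq> x3" by (rule linear_vars_distinct[of ?L "[]" _ "[?g, ?h]" _ "[?h, ?g]"]) (use x l in simp_all)
    moreover have "filter (\<lambda>z. z \<in> {?g, ?h, x3}) u = filter (\<lambda>z. z \<in> {?g, ?h, x3}) (u_on ?L)"
      by (rule filter_u_eq_filter_u_on) (use x in auto)
    ultimately have "filter (\<lambda>z. z \<in> {?g, ?h, x3}) u = [?g, ?h, x3, ?h, ?g]"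
      using x l linear_neq_dvar[OF _ Dc] linear_neq_dvar[OF _ Dd] by auto
    then show ?thesis using that l by blast
  next
    assume "filter (\<lambda>y. y \<in> ?L) W = [c,d,0,d,c]"
    with dec obtain x2 where x: "u_on ?L = [?g, ?h, x2, ?h, ?g]" and l: "count_list u x2 = 1"
      using ne by (auto simp: list_all2_Cons2)
    have "filter (\<lambda>z. z \<in> {?g, ?h, x2}) u = filter (\<lambda>z. z \<in> {?g, ?h, x2}) (u_on ?L)"
      by (rule filter_u_eq_filter_u_on) (use x in auto)
    then show ?thesis using that l x by simp
  qed
  have "rigid S [?g, ?h, t, ?h, ?g]"
    using rigid_map_nth[OF rigid_abcba, of "[?g, ?h, t]"] gh lt
      linear_neq_dvar[OF _ Dc] linear_neq_dvar[OF _ Dd] by auto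
  then show ?thesis using ft by (intro doubled_pair_preserved_if_rigid[OF Dc Dd, of "{?g, ?h, t}"]) auto
qed

lemma doubled_pair_preserved_linear_after:
  assumes D0: "doubled 0" and Dc: "doubled c" and Dd: "doubled d" and nb: "\<not> doubled b"
    and cd: "precedes P c d" and db: "precedes P d b"
  shows "filter (\<lambda>y. y \<in> {c,d}) w' = filter (\<lambda>y. y \<in> {c,d}) w"
proof -
  let ?L = "{0,c,d,b}" and ?e = "dvar 0" and ?g = "dvar c" and ?h = "dvar d"
  have ne: "c \<noteq> d" "d \<noteq> b" "c \<noteq> b" "c \<noteq> 0" "d \<noteq> 0" "b \<noteq> 0"
    using precedes_letters[OF cd] precedes_letters[OF db] precedes_neq[OF dP precedes_trans[OF dP cd db]]
    by auto
  have T: "filter (\<lambda>y. y \<in> ?L) w = [0,c,d,b,0,b,d,c]"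
    using filter_w_with_0[OF filter_precedes_chain[OF dP cd db]] by (simp add: insert_commute)
  then have split: "filter (\<lambda>y. y \<in> ?L) p @ filter (\<lambda>y. y \<in> ?L) W @ filter (\<lambda>y. y \<in> ?L) q = [0,c,d,b,0,b,d,c]"
    using filter_w_split[of ?L] by simp
  have pq: "0 \<notin> set p" "c \<notin> set q" using doubled_notin_context D0 Dc by auto
  have "filter (\<lambda>y. y \<in> ?L) p = []" by (rule prefix_without_head[of _ _ 0]) (use split pq in auto)
  moreover have "filter (\<lambda>y. y \<in> ?L) q = []"
    by (rule suffix_without_last[of "filter (\<lambda>y. y \<in> ?L) p @ filter (\<lambda>y. y \<in> ?L) W" _ "[0,c,d,b,0,b,d]" c])
      (use split pq in auto)
  ultimately have W: "filter (\<lambda>y. y \<in> ?L) W = [0,c,d,b,0,b,d,c]" using split by simp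
  have "successively (\<noteq>) (filter (\<lambda>y. y \<in> ?L) W)" by (rule successively_filter_W) (use T ne in simp)
  then have "list_all2 (\<lambda>z l. if l = b then count_list u z = 1 else z = dvar l)
      (u_on ?L) (filter (\<lambda>y. y \<in> ?L) W)"
    by (intro u_on_decode nb no_square_if_successively) (use D0 Dc Dd in auto)
  with W obtain x3 x5 where x: "u_on ?L = [?e, ?g, ?h, x3, ?e, x5, ?h, ?g]"
    and l: "count_list u x3 = 1" "count_list u x5 = 1"
    using ne by (auto simp: list_all2_Cons2)
  have "x3 \<noteq> x5" by (rule linear_vars_distinct[of ?L "[?e, ?g, ?h]" _ "[?e]" _ "[?h, ?g]"]) (use x l in simp_all)
  moreover have "filter (\<lambda>z. z \<in> {?g, ?h, x3}) u = filter (\<lambda>z. z \<in> {?g, ?h, x3}) (u_on ?L)"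
    by (rule filter_u_eq_filter_u_on) (use x in auto)
  moreover have "?e \<noteq> ?g" "?e \<noteq> ?h" "?g \<noteq> ?h" using dvar_inj D0 Dc Dd ne by metis+
  ultimately have "filter (\<lambda>z. z \<in> {?g, ?h, x3}) u = [?g, ?h, x3, ?h, ?g]"
    using x l linear_neq_dvar[OF _ D0] linear_neq_dvar[OF _ Dc] linear_neq_dvar[OF _ Dd] by auto
  moreover have "rigid S [?g, ?h, x3, ?h, ?g]"
    using rigid_map_nth[OF rigid_abcba, of "[?g, ?h, x3]"] \<open>?g \<noteq> ?h\<close> l
      linear_neq_dvar[OF _ Dc] linear_neq_dvar[OF _ Dd] by auto
  ultimately show ?thesis by (intro doubled_pair_preserved_if_rigid[OF Dc Dd, of "{?g, ?h, x3}"]) auto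
qed

lemma doubled_pair_preserved_linear_between:
  assumes D0: "doubled 0" and Dc: "doubled c" and Dd: "doubled d" and nb: "\<not> doubled b"
    and cb: "precedes P c b" and bd: "precedes P b d"
  shows "filter (\<lambda>y. y \<in> {c,d}) w' = filter (\<lambda>y. y \<in> {c,d}) w"
proof -
  let ?L = "{0,c,b,d}" and ?e = "dvar 0" and ?g = "dvar c" and ?h = "dvar d"
  have ne: "c \<noteq> d" "d \<noteq> b" "c \<noteq> b" "c \<noteq> 0" "d \<noteq> 0" "b \<noteq> 0"
    using precedes_letters[OF cb] precedes_letters[OF bd] precedes_neq[OF dP precedes_trans[OF dP cb bd]]
    by auto
  have T: "filter (\<lambda>y. y \<in> ?L) w = [0,c,b,d,0,d,b,c]"
    using filter_w_with_0[OF filter_precedes_chain[OF dP cb bd]] by (simp add: insert_commute)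
  then have split: "filter (\<lambda>y. y \<in> ?L) p @ filter (\<lambda>y. y \<in> ?L) W @ filter (\<lambda>y. y \<in> ?L) q = [0,c,b,d,0,d,b,c]"
    using filter_w_split[of ?L] by simp
  have pq: "0 \<notin> set p" "c \<notin> set q" using doubled_notin_context D0 Dc by auto
  have "filter (\<lambda>y. y \<in> ?L) p = []" by (rule prefix_without_head[of _ _ 0]) (use split pq in auto)
  moreover have "filter (\<lambda>y. y \<in> ?L) q = []"
    by (rule suffix_without_last[of "filter (\<lambda>y. y \<in> ?L) p @ filter (\<lambda>y. y \<in> ?L) W" _ "[0,c,b,d,0,d,b]" c])
      (use split pq in auto)
  ultimately have W: "filter (\<lambda>y. y \<in> ?L) W = [0,c,b,d,0,d,b,c]" using split by simp
  have "successively (\<noteq>) (filter (\<lambda>y. y \<in> ?L) W)" by (rule successively_filter_W) (use T ne in simp)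
  then have "list_all2 (\<lambda>z l. if l = b then count_list u z = 1 else z = dvar l)
      (u_on ?L) (filter (\<lambda>y. y \<in> ?L) W)"
    by (intro u_on_decode nb no_square_if_successively) (use D0 Dc Dd in auto)
  with W obtain x2 x6 where x: "u_on ?L = [?e, ?g, x2, ?h, ?e, ?h, x6, ?g]"
    and l: "count_list u x2 = 1" "count_list u x6 = 1"
    using ne by (auto simp: list_all2_Cons2)
  have "x2 \<noteq> x6" by (rule linear_vars_distinct[of ?L "[?e, ?g]" _ "[?h, ?e, ?h]" _ "[?g]"]) (use x l in simp_all)
  moreover have "?e \<noteq> ?g" "?e \<noteq> ?h" "?g \<noteq> ?h" using dvar_inj D0 Dc Dd ne by metis+
  ultimately have "rigid S (u_on ?L)"
    using rigid_map_nth[OF rigid_abcdadeb, of "[?e, ?g, x2, ?h, x6]"] x l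
      linear_neq_dvar[OF _ D0] linear_neq_dvar[OF _ Dc] linear_neq_dvar[OF _ Dd] by auto
  then show ?thesis by (rule pair_preserved_if_rigid_u_on) auto
qed

text \<open>The one configuration in which a pair may be reversed: \<open>u\<close> contains the pattern
  \<open>x s y z x z y\<close> with \<open>s\<close> linear.\<close>

lemma doubled_pair_mirrored_if_abcdadc:
  assumes Dc: "doubled c" and Dd: "doubled d" and ys: "distinct [e, s, dvar c, dvar d]"
    and fX: "filter (\<lambda>z. z \<in> {e, s, dvar c, dvar d}) u = [e, s, dvar c, dvar d, e, dvar d, dvar c]"
  shows "filter (\<lambda>y. y \<in> {c,d}) w' = [c,d,d,c] \<or> filter (\<lambda>y. y \<in> {c,d}) w' = [d,c,c,d]"
proof -
  let ?ys = "[e, s, dvar c, dvar d]" and ?X = "{e, s, dvar c, dvar d}"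
  have "satisfies S (map (nth ?ys) [0,1,2,3,0,3,2]) (filter (\<lambda>z. z \<in> ?X) v)"
    using satisfies_filter[OF identity, of ?X] fX by simp
  from satisfies_map_nth_inverse[OF this ys] obtain y' where
    y': "filter (\<lambda>z. z \<in> ?X) v = map (nth ?ys) y'" and sy': "satisfies S [0,1,2,3,0,3,2] y'"
    by auto
  have sy'': "set y' \<subseteq> {..<length ?ys}" using satisfies_set_subset[OF sy'] by auto
  have "filter (\<lambda>z. z \<in> {dvar c, dvar d}) v = filter (\<lambda>z. z \<in> nth ?ys ` {2,3}) (filter (\<lambda>z. z \<in> ?X) v)"
    by (subst filter_filter_absorb) auto
  also have "\<dots> = map (nth ?ys) (filter (\<lambda>z. z \<in> {2,3}) y')"
    unfolding y' by (rule filter_map_nth[OF ys sy'']) auto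
  finally have "filter (\<lambda>z. z \<in> {dvar c, dvar d}) v = [dvar c, dvar d, dvar d, dvar c] \<or>
      filter (\<lambda>z. z \<in> {dvar c, dvar d}) v = [dvar d, dvar c, dvar c, dvar d]"
    using abcdadc_restriction_cd[OF sy'] by auto
  then show ?thesis
    unfolding filter_w'_doubled_pair[OF Dc Dd] using sigma_on_dvar[OF Dc] sigma_on_dvar[OF Dd] by auto
qed

lemma doubled_pair_mirrored_linear_before:
  assumes D0: "doubled 0" and Dc: "doubled c" and Dd: "doubled d" and nb: "\<not> doubled b"
    and bc: "precedes P b c" and cd: "precedes P c d"
  shows "filter (\<lambda>y. y \<in> {c,d}) w' = [c,d,d,c] \<or> filter (\<lambda>y. y \<in> {c,d}) w' = [d,c,c,d]"
proof -
  let ?L = "{0,b,c,d}" and ?e = "dvar 0" and ?g = "dvar c" and ?h = "dvar d"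
  have ne: "c \<noteq> d" "b \<noteq> c" "b \<noteq> d" "c \<noteq> 0" "d \<noteq> 0" "b \<noteq> 0"
    using precedes_letters[OF bc] precedes_letters[OF cd] precedes_neq[OF dP precedes_trans[OF dP bc cd]]
    by auto
  have T: "filter (\<lambda>y. y \<in> ?L) w = [0,b,c,d,0,d,c,b]"
    using filter_w_with_0[OF filter_precedes_chain[OF dP bc cd]] by simp
  then have split: "filter (\<lambda>y. y \<in> ?L) p @ filter (\<lambda>y. y \<in> ?L) W @ filter (\<lambda>y. y \<in> ?L) q = [0,b,c,d,0,d,c,b]"
    using filter_w_split[of ?L] by simp
  have pq: "0 \<notin> set p" "c \<notin> set q" using doubled_notin_context D0 Dc by auto
  have "filter (\<lambda>y. y \<in> ?L) p = []" by (rule prefix_without_head[of _ _ 0]) (use split pq in auto)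
  moreover have "filter (\<lambda>y. y \<in> ?L) q = [] \<or> filter (\<lambda>y. y \<in> ?L) q = [b]"
    by (rule suffix_without_second_last[of "filter (\<lambda>y. y \<in> ?L) p @ filter (\<lambda>y. y \<in> ?L) W" _ "[0,b,c,d,0,d]" c])
      (use split pq in auto)
  ultimately have W: "filter (\<lambda>y. y \<in> ?L) W = [0,b,c,d,0,d,c,b] \<or> filter (\<lambda>y. y \<in> ?L) W = [0,b,c,d,0,d,c]"
    using split by auto
  have "successively (\<noteq>) (filter (\<lambda>y. y \<in> ?L) W)" by (rule successively_filter_W) (use T ne in simp)
  then have dec: "list_all2 (\<lambda>z l. if l = b then count_list u z = 1 else z = dvar l)
      (u_on ?L) (filter (\<lambda>y. y \<in> ?L) W)"
    by (intro u_on_decode nb no_square_if_successively) (use D0 Dc Dd in auto)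
  from W obtain x1 rest where x: "u_on ?L = [?e, x1, ?g, ?h, ?e, ?h, ?g] @ rest"
    and l: "count_list u x1 = 1" and rest: "\<forall>z\<in>set rest. count_list u z = 1"
  proof
    assume "filter (\<lambda>y. y \<in> ?L) W = [0,b,c,d,0,d,c,b]"
    with dec obtain x1 x7 where "u_on ?L = [?e, x1, ?g, ?h, ?e, ?h, ?g, x7]"
      "count_list u x1 = 1" "count_list u x7 = 1"
      using ne by (auto simp: list_all2_Cons2)
    then show ?thesis using that[of x1 "[x7]"] by simp
  next
    assume "filter (\<lambda>y. y \<in> ?L) W = [0,b,c,d,0,d,c]"
    with dec obtain x1 where "u_on ?L = [?e, x1, ?g, ?h, ?e, ?h, ?g]" "count_list u x1 = 1"
      using ne by (auto simp: list_all2_Cons2)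
    then show ?thesis using that[of x1 "[]"] by simp
  qed
  have x1: "x1 \<notin> set rest"
  proof
    assume "x1 \<in> set rest"
    then obtain r1 r2 where "rest = r1 @ x1 # r2" by (meson split_list)
    then have "u_on ?L = [?e] @ x1 # ([?g, ?h, ?e, ?h, ?g] @ r1) @ x1 # r2" using x by simp
    then show False using linear_vars_distinct l by blast
  qed
  have dd: "?e \<noteq> ?g" "?e \<noteq> ?h" "?g \<noteq> ?h" using dvar_inj D0 Dc Dd ne by metis+
  have "filter (\<lambda>z. z \<in> {?e, x1, ?g, ?h}) u = filter (\<lambda>z. z \<in> {?e, x1, ?g, ?h}) (u_on ?L)"
    by (rule filter_u_eq_filter_u_on) (use x in auto)
  also have "\<dots> = [?e, x1, ?g, ?h, ?e, ?h, ?g]"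
    using x x1 rest linear_neq_dvar[OF _ D0] linear_neq_dvar[OF _ Dc] linear_neq_dvar[OF _ Dd]
    by (auto simp: filter_empty_conv)
  finally have "filter (\<lambda>z. z \<in> {?e, x1, ?g, ?h}) u = [?e, x1, ?g, ?h, ?e, ?h, ?g]" .
  moreover have "distinct [?e, x1, ?g, ?h]"
    using dd l linear_neq_dvar[OF _ D0] linear_neq_dvar[OF _ Dc] linear_neq_dvar[OF _ Dd] by auto
  ultimately show ?thesis by (intro doubled_pair_mirrored_if_abcdadc[OF Dc Dd])
qed

lemma exists_undoubled_letter:
  assumes D0: "doubled 0"
  obtains b where "b \<in> set P" "\<not> doubled b"
proof (rule ccontr)
  assume "\<not> thesis"
  with that have all: "\<And>l. l \<in> insert 0 (set P) \<Longrightarrow> doubled l" using D0 by auto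
  have "inj_on dvar (insert 0 (set P))" by (rule inj_onI) (use all dvar_inj in blast)
  moreover have "dvar ` insert 0 (set P) \<subseteq> set u" using all dvar_spec by blast
  ultimately have "card (insert 0 (set P)) \<le> card (set u)" by (simp add: card_inj_on_le)
  moreover have "card (insert 0 (set P)) = length P + 1" using P0 distinct_card[OF dP] by simp
  ultimately show False using few_vars by simp
qed

lemma precedes_not_hd:
  assumes bc: "precedes P b c"
  shows "c \<noteq> hd P"
proof
  assume ch: "c = hd P"
  have "b \<noteq> c" using precedes_neq[OF dP bc] .
  moreover have "P \<noteq> []" using precedes_mem[OF bc] by auto
  then obtain P' where "P = c # P'" using ch by (cases P) auto
  ultimately show False using bc unfolding precedes_def by simp
qed

lemma pair_0c_preserved:
  assumes cP: "c \<in> set P"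
  shows "filter (\<lambda>y. y \<in> {0,c}) w' = filter (\<lambda>y. y \<in> {0,c}) w"
proof (cases "doubled 0 \<and> doubled c")
  case True
  then have D0: "doubled 0" and Dc: "doubled c" by auto
  obtain b where bP: "b \<in> set P" and nb: "\<not> doubled b" using exists_undoubled_letter[OF D0] by blast
  have "b \<noteq> c" using nb Dc by auto
  from precedes_total[OF dP bP cP this] show ?thesis
  proof
    assume "precedes P b c"
    then show ?thesis by (rule pairs_preserved_0_linear_doubled[OF D0 nb Dc]) auto
  next
    assume "precedes P c b"
    then show ?thesis by (rule pairs_preserved_0_doubled_linear[OF D0 Dc nb]) auto
  qed
next
  case False
  have "filter (\<lambda>z. z \<in> {c}) P = [c]" by (rule filter_distinct_one[OF dP]) (use cP in auto)
  from filter_w_with_0[OF this] have "filter (\<lambda>y. y \<in> {0,c}) w = [0,c,0,c]" by simp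
  then have "successively (\<noteq>) (filter (\<lambda>y. y \<in> {0,c}) W)"
    using mem_P_neq_0[OF cP] by (intro successively_filter_W) simp
  note no_square = no_square_if_successively[OF this]
  consider "\<not> doubled 0" "\<not> doubled c" | l where "l \<in> {0,c}" "doubled l" "\<And>l'. l' \<in> {0,c} \<Longrightarrow> doubled l' \<Longrightarrow> l' = l"
    using False by auto
  then show ?thesis
  proof cases
    case 1
    then show ?thesis by (rule pair_preserved_undoubled)
  next
    case 2
    show ?thesis by (rule pair_preserved_one_doubled[OF _ _ 2 no_square]) auto
  qed
qed

lemma doubled_letter_pair_preserved_0_undoubled:
  assumes n0: "\<not> doubled 0" and nc: "\<not> doubled c" and Dd: "doubled d" and cd: "precedes P c d"
  shows "filter (\<lambda>y. y \<in> {c,d}) w' = filter (\<lambda>y. y \<in> {c,d}) w"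
proof -
  have "filter (\<lambda>y. y \<in> {0,c,d}) w = [0,c,d,0,d,c]"
    using filter_w_with_0[of "{c,d}"] cd unfolding precedes_def by simp
  then have "successively (\<noteq>) (filter (\<lambda>y. y \<in> {0,c,d}) W)"
    using precedes_letters[OF cd] by (intro successively_filter_W) simp
  note no_square = no_square_if_successively[OF this]
  have only: "\<And>l. l \<in> {0,c,d} \<Longrightarrow> doubled l \<Longrightarrow> l = d" using n0 nc by auto
  show ?thesis by (rule pair_preserved_one_doubled[OF _ _ _ Dd only no_square]) auto
qed

lemma first_letter_pair_preserved:
  assumes Dc: "doubled c" and nd: "\<not> doubled d" and cd: "precedes P c d"
  shows "filter (\<lambda>y. y \<in> {c,d}) w' = filter (\<lambda>y. y \<in> {c,d}) w"
proof -
  have ne: "c \<noteq> d" "c \<noteq> 0" "d \<noteq> 0" using precedes_letters[OF cd] by auto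
  have "filter (\<lambda>y. y \<in> {c,d}) w = [c,d,d,c]"
    using filter_w_without_0[of "{c,d}" "[c,d]"] cd ne unfolding precedes_def by simp
  then have split: "filter (\<lambda>y. y \<in> {c,d}) p @ filter (\<lambda>y. y \<in> {c,d}) W @ filter (\<lambda>y. y \<in> {c,d}) q = [c,d,d,c]"
    using filter_w_split[of "{c,d}"] by simp
  have pq: "c \<notin> set p" "c \<notin> set q" using doubled_notin_context Dc by auto
  have "filter (\<lambda>y. y \<in> {c,d}) p = []" by (rule prefix_without_head[of _ _ c]) (use split pq in auto)
  moreover have "filter (\<lambda>y. y \<in> {c,d}) q = []"
    by (rule suffix_without_last[of "filter (\<lambda>y. y \<in> {c,d}) p @ filter (\<lambda>y. y \<in> {c,d}) W" _ "[c,d,d]" c])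
      (use split pq in auto)
  ultimately have "filter (\<lambda>y. y \<in> {c,d}) W = [c,d,d,c]" using split by simp
  then have no_square: "\<And>A B. filter (\<lambda>y. y \<in> {c,d}) W \<noteq> A @ c # c # B"
    using abba_no_square_a[OF ne(1)] by simp
  have only: "\<And>l. l \<in> {c,d} \<Longrightarrow> doubled l \<Longrightarrow> l = c" using nd by auto
  show ?thesis by (rule pair_preserved_one_doubled[OF _ _ _ Dc only no_square]) auto
qed

lemma pair_cd_preserved_or_mirrored:
  assumes cd: "precedes P c d"
  shows "filter (\<lambda>y. y \<in> {c,d}) w' = filter (\<lambda>y. y \<in> {c,d}) w \<or>
    (c \<noteq> hd P \<and> d \<noteq> hd P \<and>
      (filter (\<lambda>y. y \<in> {c,d}) w' = [c,d,d,c] \<or> filter (\<lambda>y. y \<in> {c,d}) w' = [d,c,c,d]))"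
proof -
  have cP: "c \<in> set P" and dP': "d \<in> set P" using precedes_mem[OF cd] by auto
  consider "\<not> doubled c" "\<not> doubled d" | "doubled c" "\<not> doubled d"
    | "\<not> doubled c" "doubled d" "\<not> doubled 0" | "\<not> doubled c" "doubled d" "doubled 0"
    | "doubled c" "doubled d" "\<not> doubled 0" | "doubled c" "doubled d" "doubled 0"
    by blast
  then show ?thesis
  proof cases
    case 1
    then show ?thesis using pair_preserved_undoubled by simp
  next
    case 2
    then show ?thesis using first_letter_pair_preserved[OF _ _ cd] by simp
  next
    case 3
    then show ?thesis using doubled_letter_pair_preserved_0_undoubled[OF _ _ _ cd] by simp
  next
    case 4
    then have "filter (\<lambda>y. y \<in> {c,d}) w' = filter (\<lambda>y. y \<in> {c,d}) w"
      by (intro pairs_preserved_0_linear_doubled[OF _ _ _ cd]) auto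
    then show ?thesis ..
  next
    case 5
    then show ?thesis using doubled_pair_preserved_0_linear[OF _ _ _ cd] by simp
  next
    case 6
    then have D: "doubled 0" "doubled c" "doubled d" by auto
    obtain b where bP: "b \<in> set P" and nb: "\<not> doubled b" using exists_undoubled_letter[OF D(1)] by blast
    have bcd: "b \<noteq> c" "b \<noteq> d" using nb D by auto
    consider "precedes P b c" | "precedes P c b" "precedes P b d" | "precedes P d b"
      using precedes_total[OF dP bP cP bcd(1)] precedes_total[OF dP bP dP' bcd(2)] by argo
    then show ?thesis
    proof cases
      case 1
      then show ?thesis
        using doubled_pair_mirrored_linear_before[OF D nb 1 cd]
          precedes_not_hd[OF 1] precedes_not_hd[OF precedes_trans[OF dP 1 cd]] by simp
    next
      case 2
      then show ?thesis using doubled_pair_preserved_linear_between[OF D nb] by simp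
    next
      case 3
      then show ?thesis using doubled_pair_preserved_linear_after[OF D nb cd] by simp
    qed
  qed
qed

lemma set_w'_subset: "set w' \<subseteq> set w"
proof -
  have "set (subst \<sigma> v) \<subseteq> set W"
    using satisfies_set_subset[OF identity] unfolding subst_def by auto
  then have "set w' \<subseteq> set (p @ W @ q)" by auto
  then show ?thesis unfolding wdef .
qed

lemma mirror_pairs_w':
  assumes sP: "set P = {2..<n+2}" and hP: "hd P = 2"
  shows "mirror_pairs n w'"
proof -
  let ?Y = "{2..<n+2::nat}"
  have gw: "mirror_pairs n w"
    using mirror_words_imp_mirror_pairs[of w n] dP sP hP unfolding mirror_words_def by blast
  show ?thesis unfolding mirror_pairs_def
  proof (intro conjI ballI impI)
    show "set w' \<subseteq> insert 0 ?Y" using set_w'_subset sP by auto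
  next
    fix c assume "c \<in> ?Y"
    then show "filter (\<lambda>z. z \<in> {0,c}) w' = [0,c,0,c]"
      using pair_0c_preserved[of c] gw sP unfolding mirror_pairs_def by auto
  next
    fix c d assume c: "c \<in> ?Y" and d: "d \<in> ?Y" and cd: "c \<noteq> d"
    have g: "filter (\<lambda>z. z \<in> {c,d}) w = [c,d,d,c] \<or> filter (\<lambda>z. z \<in> {c,d}) w = [d,c,c,d]"
      using gw c d cd unfolding mirror_pairs_def by blast
    have "precedes P c d \<or> precedes P d c" using precedes_total[OF dP _ _ cd] c d sP by auto
    then show "filter (\<lambda>z. z \<in> {c,d}) w' = [c,d,d,c] \<or> filter (\<lambda>z. z \<in> {c,d}) w' = [d,c,c,d]"
    proof
      assume "precedes P c d"
      then show ?thesis using pair_cd_preserved_or_mirrored[of c d] g by auto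
    next
      assume "precedes P d c"
      then show ?thesis using pair_cd_preserved_or_mirrored[of d c] g by (auto simp: insert_commute)
    qed
  next
    fix c assume c: "c \<in> ?Y" and c2: "c \<noteq> 2"
    have g: "filter (\<lambda>z. z \<in> {2,c}) w = [2,c,c,2]" using gw c c2 unfolding mirror_pairs_def by blast
    have "2 \<in> set P" "c \<in> set P" using sP c by auto
    then have "precedes P 2 c \<or> precedes P c 2" using precedes_total[OF dP _ _ c2[symmetric]] by blast
    then show "filter (\<lambda>z. z \<in> {2,c}) w' = [2,c,c,2]"
    proof
      assume "precedes P 2 c"
      then show ?thesis using pair_cd_preserved_or_mirrored[of 2 c] g hP by auto
    next
      assume "precedes P c 2"
      then show ?thesis using pair_cd_preserved_or_mirrored[of c 2] g hP by (auto simp: insert_commute)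
    qed
  qed
qed

end

section \<open>Closure of mirror words and the main theorem\<close>

lemma (in nfb_setting) mirror_words_closed:
  assumes uv: "satisfies S u v" and few: "card (set u) \<le> n" and n2: "n \<ge> 2"
    and w: "p @ subst \<sigma> u @ q \<in> mirror_words n"
  shows "p @ subst \<sigma> v @ q \<in> mirror_words n"
proof -
  obtain P where wP: "p @ subst \<sigma> u @ q = 0 # P @ 0 # rev P" and dP: "distinct P"
    and sP: "set P = {2..<n+2}" and hP: "hd P = 2"
    using w unfolding mirror_words_def by blast
  let ?N = "{z. \<sigma> z \<noteq> []}"
  let ?u0 = "filter (\<lambda>z. z \<in> ?N) u" and ?v0 = "filter (\<lambda>z. z \<in> ?N) v"
  have eu: "subst \<sigma> ?u0 = subst \<sigma> u" by (rule subst_filter_support) simp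
  have ev: "subst \<sigma> ?v0 = subst \<sigma> v" by (rule subst_filter_support) simp
  have lP: "length P = n" using distinct_card[OF dP] sP by simp
  have "card (set ?u0) \<le> card (set u)" by (rule card_mono) auto
  with few lP have few_vars: "card (set ?u0) \<le> length P" by simp
  interpret mirror_instance S P p q ?u0 ?v0 \<sigma>
  proof unfold_locales
    show "satisfies S ?u0 ?v0" using satisfies_filter[OF uv] .
    show "distinct P" by (fact dP)
    show "0 \<notin> set P" "2 \<le> length P" using sP lP n2 by auto
    show "p @ subst \<sigma> ?u0 @ q = 0 # P @ 0 # rev P" using wP eu by simp
    show "\<And>z. z \<in> set ?u0 \<Longrightarrow> \<sigma> z \<noteq> []" by simp
    show "card (set ?u0) \<le> length P" by (fact few_vars)
  qed
  have "mirror_pairs n (p @ subst \<sigma> ?v0 @ q)" by (rule mirror_pairs_w'[OF sP hP])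
  then show ?thesis using mirror_pairs_imp_mirror_words n2 ev by simp
qed

lemma upt_mirror_word:
  assumes "n \<ge> 1"
  shows "[0] @ [2..<n+2] @ [0] @ rev [2..<n+2] \<in> mirror_words n"
  unfolding mirror_words_def
proof (intro CollectI exI conjI)
  show "[0] @ [2..<n+2] @ [0] @ rev [2..<n+2] = 0 # [2..<n+2] @ 0 # rev [2..<n+2]" by simp
  show "distinct [2..<n+2]" by (rule distinct_upt)
  show "set [2..<n+2] = {2..<n+2}" by (rule set_upt)
  show "hd [2..<n+2] = 2" using assms by (simp add: upt_rec)
qed

lemma rev_upt_mirror_word_notin:
  assumes n2: "n \<ge> 2"
  shows "[0] @ rev [2..<n+2] @ [0] @ [2..<n+2] \<notin> mirror_words n"
proof
  let ?Y = "[2..<n+2]"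
  assume "[0] @ rev ?Y @ [0] @ ?Y \<in> mirror_words n"
  then obtain P where V: "[0] @ rev ?Y @ [0] @ ?Y = 0 # P @ 0 # rev P" and sP: "set P = {2..<n+2}"
    and hP: "hd P = 2"
    unfolding mirror_words_def by blast
  have "rev ?Y @ 0 # ?Y = P @ 0 # rev P" using V by simp
  then have "rev ?Y = P" using split_first_unique[of "rev ?Y" 0 ?Y P "rev P"] sP by auto
  then have "hd P = hd (rev ?Y)" by simp
  also have "\<dots> = last ?Y" by (rule hd_rev)
  also have "last ?Y = n + 1" using n2 by (simp add: last_upt)
  finally show False using hP n2 by simp
qed

theorem theorem5p1:
  fixes S :: "'a::monoid_mult itself"
  assumes i: "\<And>n::nat. n > 1 \<Longrightarrow>
      satisfies S ([0] @ [2..<n+2] @ [0] @ rev [2..<n+2])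
                  ([0] @ rev [2..<n+2] @ [0] @ [2..<n+2])"
    and ii: "\<not> satisfies S [0, 1, 0, 1] [0, 1, 1, 0]"
    and iii: "isoterm S [0, 1, 2, 1, 0]" "isoterm S [0, 2, 1, 0, 1]"
  shows "\<not> finitely_based S"
proof (rule not_finitely_based_if_separated)
  fix n
  have "satisfies S [0, 2, 3, 0, 3, 2] [0, 3, 2, 0, 2, 3]" using i[of 2] by (simp add: upt_rec)
  then interpret nfb_setting S using ii iii by unfold_locales
  let ?m = "n + 2" and ?Y = "[2..<n+2+2]"
  show "\<exists>C u v. (u, v) \<in> identities S \<and> u \<in> C \<and> v \<notin> C \<and>
      (\<forall>a b p \<sigma> q. satisfies S a b \<longrightarrow> card (set a) \<le> n \<longrightarrow>
          p @ subst \<sigma> a @ q \<in> C \<longrightarrow> p @ subst \<sigma> b @ q \<in> C)"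
  proof (intro exI conjI allI impI)
    show "([0] @ ?Y @ [0] @ rev ?Y, [0] @ rev ?Y @ [0] @ ?Y) \<in> identities S"
      unfolding identities_def using i[of ?m] by simp
    show "[0] @ ?Y @ [0] @ rev ?Y \<in> mirror_words ?m" by (rule upt_mirror_word) simp
    show "[0] @ rev ?Y @ [0] @ ?Y \<notin> mirror_words ?m" by (rule rev_upt_mirror_word_notin) simp
    fix a b p \<sigma> q
    assume ab: "satisfies S a b" and "card (set a) \<le> n" and a: "p @ subst \<sigma> a @ q \<in> mirror_words ?m"
    then show "p @ subst \<sigma> b @ q \<in> mirror_words ?m" by (intro mirror_words_closed[OF ab _ _ a]) auto
  qed
qed

end
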